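(* Let $0<s<1$ and let $f\in C(S^1,S^1)$ be a continuous function from the unit circle to the unit circle, with Fourier series $f(e^{it})\sim\sum_{n=-\infty}^{\infty}a_ne^{int}$. If $\sum_{n=0}^{\infty}n^{2s}|a_n|^2<\infty$, then $\sum_{n=-\infty}^{\infty}|n|^{2s}|a_n|^2<\infty$, i.e. $f\in H^s(S^1,S^1)$.
   Context: $S^1=\{z\in\mathbb C:|z|=1\}$. For an integrable function $f$ on $S^1$, $a_n=\frac{1}{2\pi}\int_{-\pi}^{\pi}f(e^{it})e^{-int}\,dt$ denotes its $n$-th Fourier coefficient. $H^s(S^1,S^1)$ denotes the set of measurable functions $f:S^1\to S^1$ with $\sum_{n\in\mathbb Z}|n|^{2s}|a_n|^2<\infty$. *)

theory Defs
  imports "HOL-Analysis.Analysis"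
begin

definition fourier_coeff :: "(complex \<Rightarrow> complex) \<Rightarrow> int \<Rightarrow> complex" where
  "fourier_coeff f n =
     integral {-pi..pi} (\<lambda>t. f (cis t) * cis (- (of_int n * t))) / complex_of_real (2 * pi)"

definition Hs_circle :: "real \<Rightarrow> (complex \<Rightarrow> complex) set" where
  "Hs_circle s = {f. f \<in> borel_measurable (restrict_space lborel (sphere 0 1))
                    \<and> f ` sphere 0 1 \<subseteq> sphere 0 1
                    \<and> (\<lambda>n::int. \<bar>real_of_int n\<bar> powr (2 * s) * (cmod (fourier_coeff f n))\<^sup>2) summable_on UNIV}"

end

theory Submission
  imports Defs
begin

text \<open>
  Plan of the proof. (1) Fourier calculus on the circle and Parseval's identity for
  continuous functions, via uniform approximation by trigonometric polynomials
  (Stone--Weierstrass). (2) Rotational differences \<open>\<Delta>\<^sub>t g = g(e\<^sup>i\<^sup>t \<cdot>) - g\<close>, with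
  \<open>\<parallel>\<Delta>\<^sub>t g\<parallel>\<^sup>2 = \<Sum>\<^sub>m |e\<^sup>i\<^sup>m\<^sup>t - 1|\<^sup>2 |\<hat>g(m)|\<^sup>2\<close>. (3) The main estimate, in the locale
  \<open>unimodular_approx\<close>: if \<open>|f| = 1\<close> and \<open>|f - P| \<le> 1/16\<close> for a trigonometric polynomial \<open>P\<close>,
  then for \<open>r = f - P\<close> the negative-frequency part \<open>X(t)\<close> of \<open>\<parallel>\<Delta>\<^sub>t r\<parallel>\<^sup>2\<close> satisfies
  \<open>X(t) \<le> 65 Y(t) + C t\<^sup>2\<close>, \<open>Y(t)\<close> being the positive-frequency part; the identity
  \<open>|P + r|\<^sup>2 = 1\<close> is what couples the two halves of the spectrum. (4) A dyadic
  characterisation \<open>|m|\<^sup>2\<^sup>s \<asymp> \<Sum>\<^sub>j 4\<^sup>j\<^sup>s |e\<^sup>i\<^sup>m\<^sup>\<pi>\<^sup>/\<^sup>2\<^sup>j - 1|\<^sup>2\<close>, which converts (3) into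
  \<open>\<Sum>\<^sub>m\<^sub><\<^sub>0 |m|\<^sup>2\<^sup>s |\<hat>r(m)|\<^sup>2 \<lesssim> \<Sum>\<^sub>m\<^sub>>\<^sub>0 m\<^sup>2\<^sup>s |\<hat>r(m)|\<^sup>2 + 1\<close>. Since \<open>\<hat>r\<close> and \<open>\<hat>f\<close> differ in
  finitely many places, the theorem follows.
\<close>

abbreviation circle_continuous :: "(complex \<Rightarrow> 'a::topological_space) \<Rightarrow> bool" where
  "circle_continuous h \<equiv> continuous_on (sphere (0::complex) 1) h"

definition circle_mean :: "(complex \<Rightarrow> complex) \<Rightarrow> complex" where
  "circle_mean h = integral {-pi..pi} (\<lambda>x. h (cis x)) / complex_of_real (2*pi)"

definition circle_mean_real :: "(complex \<Rightarrow> real) \<Rightarrow> real" where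
  "circle_mean_real g = integral {-pi..pi} (\<lambda>x. g (cis x)) / (2*pi)"

lemma circle_continuous_cis: "circle_continuous h \<Longrightarrow> continuous_on A (\<lambda>x. h (cis x))"
  by (rule continuous_on_compose2[where t="sphere 0 1"]) (auto intro: continuous_intros)

lemma circle_integrable:
  fixes h :: "complex \<Rightarrow> 'a::banach"
  shows "circle_continuous h \<Longrightarrow> (\<lambda>x. h (cis x)) integrable_on {a..b}"
  by (rule integrable_continuous_interval) (rule circle_continuous_cis)

lemma fourier_coeff_circle_mean: "fourier_coeff h m = circle_mean (\<lambda>z. h z * z powi (-m))"
  unfolding fourier_coeff_def circle_mean_def by (simp add: cis_power_int)

lemma circle_mean_cong: "(\<And>x. h (cis x) = g (cis x)) \<Longrightarrow> circle_mean h = circle_mean g"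
  unfolding circle_mean_def by simp

lemma circle_mean_add:
  "circle_continuous h \<Longrightarrow> circle_continuous g \<Longrightarrow>
     circle_mean (\<lambda>z. h z + g z) = circle_mean h + circle_mean g"
  unfolding circle_mean_def by (simp add: integral_add circle_integrable add_divide_distrib)

lemma circle_mean_diff:
  "circle_continuous h \<Longrightarrow> circle_continuous g \<Longrightarrow>
     circle_mean (\<lambda>z. h z - g z) = circle_mean h - circle_mean g"
  unfolding circle_mean_def by (simp add: integral_diff circle_integrable diff_divide_distrib)

lemma circle_mean_cmult: "circle_mean (\<lambda>z. c * h z) = c * circle_mean h"
  unfolding circle_mean_def by simp

lemma circle_mean_sum:
  "finite I \<Longrightarrow> (\<And>i. i \<in> I \<Longrightarrow> circle_continuous (h i)) \<Longrightarrow>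
     circle_mean (\<lambda>z. \<Sum>i\<in>I. h i z) = (\<Sum>i\<in>I. circle_mean (h i))"
  unfolding circle_mean_def by (simp add: integral_sum circle_integrable sum_divide_distrib)

lemma circle_mean_cnj: "circle_mean (\<lambda>z. cnj (h z)) = cnj (circle_mean h)"
  unfolding circle_mean_def by (simp add: integral_cnj)

lemma circle_mean_of_real:
  "circle_continuous g \<Longrightarrow> circle_mean (\<lambda>z. complex_of_real (g z)) = complex_of_real (circle_mean_real g)"
  unfolding circle_mean_def circle_mean_real_def
  using has_integral_of_real[OF integrable_integral[OF circle_integrable[of g "-pi" pi]], where 'b=complex]
  by (simp add: integral_unique)

lemma circle_mean_real_mono:
  "circle_continuous g \<Longrightarrow> circle_continuous g' \<Longrightarrow> (\<And>z. z \<in> sphere 0 1 \<Longrightarrow> g z \<le> g' z) \<Longrightarrow>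
     circle_mean_real g \<le> circle_mean_real g'"
  unfolding circle_mean_real_def by (intro divide_right_mono integral_le circle_integrable) auto

lemma circle_mean_real_add:
  "circle_continuous g \<Longrightarrow> circle_continuous g' \<Longrightarrow>
     circle_mean_real (\<lambda>z. g z + g' z) = circle_mean_real g + circle_mean_real g'"
  unfolding circle_mean_real_def by (simp add: integral_add circle_integrable add_divide_distrib)

lemma circle_mean_real_cmult: "circle_mean_real (\<lambda>z. c * g z) = c * circle_mean_real g"
  unfolding circle_mean_real_def by simp

lemma circle_mean_real_const: "circle_mean_real (\<lambda>z. c) = c"
  unfolding circle_mean_real_def by simp

lemma circle_mean_bound:
  assumes h: "circle_continuous h" and B: "\<And>z. z \<in> sphere 0 1 \<Longrightarrow> norm (h z) \<le> B"
  shows "norm (circle_mean h) \<le> B"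
proof -
  have "norm (integral {-pi..pi} (\<lambda>x. h (cis x))) \<le> integral {-pi..pi} (\<lambda>x. B)"
    by (rule integral_norm_bound_integral) (use circle_integrable[OF h] B in auto)
  then have "norm (integral {-pi..pi} (\<lambda>x. h (cis x))) \<le> 2*pi*B" by simp
  then show ?thesis unfolding circle_mean_def by (simp add: norm_divide field_simps)
qed

lemma integral_cis_int:
  fixes k :: int
  shows "integral {-pi..pi} (\<lambda>x. cis (of_int k * x)) = (if k = 0 then complex_of_real (2*pi) else 0)"
proof (cases "k = 0")
  case True then show ?thesis by (simp add: scaleR_conv_of_real)
next
  case False
  define F where "F w = exp (\<i> * of_int k * w) / (\<i> * of_int k)" for w :: complex
  have deriv: "((\<lambda>x. F (of_real x)) has_vector_derivative cis (of_int k * x)) (at x within {-pi..pi})" for x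
  proof -
    have "(F has_field_derivative exp (\<i> * of_int k * of_real x)) (at (of_real x))"
      unfolding F_def using False by (auto intro!: derivative_eq_intros simp: field_simps)
    moreover have "exp (\<i> * of_int k * of_real x) = cis (of_int k * x)"
      by (simp add: cis_conv_exp mult_ac)
    ultimately show ?thesis using has_vector_derivative_real_field by metis
  qed
  have "((\<lambda>x. cis (of_int k * x)) has_integral (F (of_real pi) - F (of_real (-pi)))) {-pi..pi}"
    by (rule fundamental_theorem_of_calculus) (use deriv in auto)
  moreover have "F (of_real pi) = F (of_real (-pi))"
  proof -
    have "cis (of_int k * pi) = cis (- (of_int k * pi))"
      by (simp add: cis.ctr sin_zero_iff_int2)
    then show ?thesis unfolding F_def by (simp add: cis_conv_exp mult_ac)
  qed
  ultimately show ?thesis using False by (simp add: integral_unique)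
qed

lemma circle_mean_power_int: "circle_mean (\<lambda>z. z powi k) = (if k = 0 then 1 else 0)"
  unfolding circle_mean_def by (simp add: cis_power_int integral_cis_int)

lemma circle_continuous_rotate: "circle_continuous h \<Longrightarrow> circle_continuous (\<lambda>z. h (cis t * z))"
  by (rule continuous_on_compose2[where t="sphere 0 1"]) (auto intro: continuous_intros simp: norm_mult)

lemma periodic_integral:
  fixes g :: "real \<Rightarrow> 'a::banach"
  assumes cont: "continuous_on UNIV g" and per: "\<And>x. g (x + 2*pi) = g x"
    and a: "-pi \<le> a" "a \<le> pi"
  shows "integral {a..a+2*pi} g = integral {-pi..pi} g"
proof -
  have int: "g integrable_on {u..v}" for u v
    by (rule integrable_continuous_interval) (use cont continuous_on_subset in blast)
  have "integral {a..pi} g + integral {pi..a+2*pi} g = integral {a..a+2*pi} g"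
    by (rule Henstock_Kurzweil_Integration.integral_combine) (use a int in auto)
  moreover have "integral {pi..a+2*pi} g = integral {-pi..a} g"
  proof -
    have "integral {-pi..a} (g \<circ> (+) (2*pi)) = integral {-pi+2*pi..a+2*pi} g"
      by (rule integral_shift_Icc_real)
    moreover have "g \<circ> (+) (2*pi) = g" using per by (auto simp: add.commute)
    ultimately show ?thesis by simp
  qed
  moreover have "integral {-pi..a} g + integral {a..pi} g = integral {-pi..pi} g"
    by (rule Henstock_Kurzweil_Integration.integral_combine) (use a int in auto)
  ultimately show ?thesis by (simp add: add.commute)
qed

lemma circle_mean_rotate:
  assumes h: "circle_continuous h" and t: "0 \<le> t" "t \<le> 2*pi"
  shows "circle_mean (\<lambda>z. h (cis t * z)) = circle_mean h"
proof -
  define g where "g x = h (cis x)" for x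
  have g_cont: "continuous_on UNIV g" unfolding g_def by (rule circle_continuous_cis[OF h])
  have g_per: "g (x + 2*pi) = g x" for x unfolding g_def by (simp add: cis.ctr)
  have "integral {-pi..pi} (\<lambda>x. h (cis t * cis x)) = integral {-pi..pi} (g \<circ> (+) t)"
    by (simp add: g_def cis_mult o_def)
  also have "\<dots> = integral {-pi+t..pi+t} g" by (rule integral_shift_Icc_real)
  also have "\<dots> = integral {(t-pi)..(t-pi)+2*pi} g" by (simp add: algebra_simps)
  also have "\<dots> = integral {-pi..pi} g" by (rule periodic_integral[OF g_cont g_per]) (use t in auto)
  finally show ?thesis unfolding circle_mean_def g_def by simp
qed

lemma circle_continuous_mult_power_int: "circle_continuous h \<Longrightarrow> circle_continuous (\<lambda>z. h z * z powi k)"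
  by (intro continuous_intros) auto

lemma fourier_coeff_cong: "(\<And>x. h (cis x) = g (cis x)) \<Longrightarrow> fourier_coeff h m = fourier_coeff g m"
  unfolding fourier_coeff_circle_mean by (rule circle_mean_cong) simp

lemma fourier_coeff_add:
  "circle_continuous h \<Longrightarrow> circle_continuous g \<Longrightarrow>
     fourier_coeff (\<lambda>z. h z + g z) m = fourier_coeff h m + fourier_coeff g m"
  unfolding fourier_coeff_circle_mean
  by (simp add: distrib_right circle_mean_add circle_continuous_mult_power_int)

lemma fourier_coeff_diff:
  "circle_continuous h \<Longrightarrow> circle_continuous g \<Longrightarrow>
     fourier_coeff (\<lambda>z. h z - g z) m = fourier_coeff h m - fourier_coeff g m"
  unfolding fourier_coeff_circle_mean
  by (simp add: left_diff_distrib circle_mean_diff circle_continuous_mult_power_int)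

lemma fourier_coeff_cmult: "fourier_coeff (\<lambda>z. c * h z) m = c * fourier_coeff h m"
  unfolding fourier_coeff_circle_mean by (simp add: circle_mean_cmult mult.assoc)

lemma fourier_coeff_sum:
  "finite I \<Longrightarrow> (\<And>i. i \<in> I \<Longrightarrow> circle_continuous (h i)) \<Longrightarrow>
     fourier_coeff (\<lambda>z. \<Sum>i\<in>I. h i z) m = (\<Sum>i\<in>I. fourier_coeff (h i) m)"
  unfolding fourier_coeff_circle_mean
  by (simp add: sum_distrib_right circle_mean_sum circle_continuous_mult_power_int)

lemma fourier_coeff_cnj: "fourier_coeff (\<lambda>z. cnj (h z)) m = cnj (fourier_coeff h (-m))"
proof -
  have "fourier_coeff (\<lambda>z. cnj (h z)) m = circle_mean (\<lambda>z. cnj (h z * z powi m))"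
    unfolding fourier_coeff_circle_mean by (rule circle_mean_cong) (simp add: cis_power_int cis_cnj)
  also have "\<dots> = cnj (circle_mean (\<lambda>z. h z * z powi m))" by (rule circle_mean_cnj)
  finally show ?thesis by (simp add: fourier_coeff_circle_mean)
qed

lemma fourier_coeff_shift: "fourier_coeff (\<lambda>z. z powi j * h z) m = fourier_coeff h (m - j)"
  unfolding fourier_coeff_circle_mean
  by (rule circle_mean_cong) (simp add: cis_power_int cis_mult algebra_simps)

lemma fourier_coeff_power_int: "fourier_coeff (\<lambda>z. z powi j) m = (if m = j then 1 else 0)"
proof -
  have "fourier_coeff (\<lambda>z. z powi j) m = circle_mean (\<lambda>z. z powi (j - m))"
    unfolding fourier_coeff_circle_mean
    by (rule circle_mean_cong) (simp add: cis_power_int cis_mult algebra_simps)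
  then show ?thesis by (simp add: circle_mean_power_int)
qed

lemma fourier_coeff_const: "fourier_coeff (\<lambda>z. c) m = (if m = 0 then c else 0)"
  using fourier_coeff_power_int[of 0 m] fourier_coeff_cmult[of c "\<lambda>z. z powi 0" m] by simp

lemma fourier_coeff_rotate:
  assumes h: "circle_continuous h" and t: "0 \<le> t" "t \<le> 2*pi"
  shows "fourier_coeff (\<lambda>z. h (cis t * z)) m = cis (of_int m * t) * fourier_coeff h m"
proof -
  define g where "g w = cis (of_int m * t) * (h w * w powi (-m))" for w
  have "fourier_coeff (\<lambda>z. h (cis t * z)) m = circle_mean (\<lambda>z. g (cis t * z))"
    unfolding fourier_coeff_circle_mean g_def
    by (rule circle_mean_cong) (simp add: cis_power_int cis_mult algebra_simps)
  also have "\<dots> = circle_mean g"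
    by (rule circle_mean_rotate[OF _ t]) (unfold g_def, intro continuous_intros h, auto)
  also have "\<dots> = cis (of_int m * t) * fourier_coeff h m"
    unfolding g_def fourier_coeff_circle_mean by (simp add: circle_mean_cmult)
  finally show ?thesis .
qed

lemma fourier_coeff_bound:
  assumes h: "circle_continuous h" and B: "\<And>z. z \<in> sphere 0 1 \<Longrightarrow> norm (h z) \<le> B"
  shows "norm (fourier_coeff h m) \<le> B"
  unfolding fourier_coeff_circle_mean
  by (rule circle_mean_bound[OF circle_continuous_mult_power_int[OF h]])
     (auto simp: norm_mult norm_power_int B)

text \<open>They form an algebra containing
  \<open>z\<close> and \<open>z\<^sup>-\<^sup>1 = cnj z\<close>, hence every real polynomial in \<open>Re z, Im z\<close>; by the
  Stone--Weierstrass theorem they are uniformly dense in the continuous functions.\<close>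

definition trig_poly :: "nat \<Rightarrow> (int \<Rightarrow> complex) \<Rightarrow> complex \<Rightarrow> complex" where
  "trig_poly D a z = (\<Sum>j\<in>{-int D..int D}. a j * z powi j)"

definition band_limited :: "nat \<Rightarrow> (int \<Rightarrow> complex) \<Rightarrow> bool" where
  "band_limited D a \<longleftrightarrow> (\<forall>j. int D < \<bar>j\<bar> \<longrightarrow> a j = 0)"

definition is_trig_poly :: "(complex \<Rightarrow> complex) \<Rightarrow> bool" where
  "is_trig_poly P \<longleftrightarrow> (\<exists>D a. band_limited D a \<and> (\<forall>z\<in>sphere 0 1. P z = trig_poly D a z))"

lemma finite_int_set_bounded:
  fixes F :: "int set"
  assumes "finite F"
  obtains K :: nat where "F \<subseteq> {-int K..int K}"
proof
  show "F \<subseteq> {-int (nat (Max (insert 0 (abs ` F))))..int (nat (Max (insert 0 (abs ` F))))}"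
  proof
    fix m assume "m \<in> F"
    then have "\<bar>m\<bar> \<le> Max (insert 0 (abs ` F))" using assms by (intro Max_ge) auto
    then show "m \<in> {-int (nat (Max (insert 0 (abs ` F))))..int (nat (Max (insert 0 (abs ` F))))}"
      by auto
  qed
qed

lemma circle_continuous_trig_poly: "circle_continuous (trig_poly D a)"
  unfolding trig_poly_def by (intro continuous_intros) auto

lemma trig_poly_extend:
  assumes "band_limited D a" "D \<le> E"
  shows "trig_poly E a z = trig_poly D a z"
  unfolding trig_poly_def
  by (rule sum.mono_neutral_right) (use assms in \<open>auto simp: band_limited_def\<close>)

lemma is_trig_poly_const: "is_trig_poly (\<lambda>z. c)"
  unfolding is_trig_poly_def
  by (rule exI[of _ 0], rule exI[of _ "\<lambda>j. if j = 0 then c else 0"])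
     (auto simp: band_limited_def trig_poly_def)

lemma is_trig_poly_monomial: "is_trig_poly (\<lambda>z. c * z powi k)"
proof -
  define a where "a j = (if j = k then c else 0)" for j
  have "trig_poly (nat \<bar>k\<bar>) a z = (\<Sum>j\<in>{-int (nat \<bar>k\<bar>)..int (nat \<bar>k\<bar>)}. if j = k then c * z powi k else 0)" for z
    unfolding trig_poly_def a_def by (rule sum.cong) auto
  also have "\<dots> z = c * z powi k" for z by (simp add: abs_if)
  finally show ?thesis
    unfolding is_trig_poly_def
    by (intro exI[of _ "nat \<bar>k\<bar>"] exI[of _ a]) (auto simp: band_limited_def a_def)
qed

lemma is_trig_poly_add:
  assumes "is_trig_poly P" "is_trig_poly Q"
  shows "is_trig_poly (\<lambda>z. P z + Q z)"
proof -
  obtain D a where a: "band_limited D a" "\<forall>z\<in>sphere 0 1. P z = trig_poly D a z"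
    using assms(1) is_trig_poly_def by auto
  obtain E b where b: "band_limited E b" "\<forall>z\<in>sphere 0 1. Q z = trig_poly E b z"
    using assms(2) is_trig_poly_def by auto
  have band: "band_limited (max D E) (\<lambda>j. a j + b j)"
    using a(1) b(1) by (auto simp: band_limited_def)
  have "P z + Q z = trig_poly (max D E) (\<lambda>j. a j + b j) z" if "z \<in> sphere 0 1" for z
  proof -
    have "P z + Q z = trig_poly (max D E) a z + trig_poly (max D E) b z"
      using a b that trig_poly_extend[of D a "max D E"] trig_poly_extend[of E b "max D E"] by auto
    also have "\<dots> = trig_poly (max D E) (\<lambda>j. a j + b j) z"
      unfolding trig_poly_def by (simp add: sum.distrib distrib_right)
    finally show ?thesis .
  qed
  then show ?thesis unfolding is_trig_poly_def using band by blast
qed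

lemma is_trig_poly_cmult:
  assumes "is_trig_poly P"
  shows "is_trig_poly (\<lambda>z. c * P z)"
proof -
  obtain D a where a: "band_limited D a" "\<forall>z\<in>sphere 0 1. P z = trig_poly D a z"
    using assms is_trig_poly_def by auto
  have "band_limited D (\<lambda>j. c * a j)" using a(1) by (auto simp: band_limited_def)
  moreover have "\<forall>z\<in>sphere 0 1. c * P z = trig_poly D (\<lambda>j. c * a j) z"
    using a(2) by (auto simp: trig_poly_def sum_distrib_left mult.assoc)
  ultimately show ?thesis unfolding is_trig_poly_def by blast
qed

lemma is_trig_poly_sum:
  assumes "finite I" "\<And>i. i \<in> I \<Longrightarrow> is_trig_poly (P i)"
  shows "is_trig_poly (\<lambda>z. \<Sum>i\<in>I. P i z)"
  using assms
proof (induction I rule: finite_induct)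
  case empty then show ?case using is_trig_poly_const[of 0] by simp
next
  case (insert x F) then show ?case by (simp add: is_trig_poly_add)
qed

lemma is_trig_poly_cong: "is_trig_poly P \<Longrightarrow> (\<And>z. z \<in> sphere 0 1 \<Longrightarrow> P z = Q z) \<Longrightarrow> is_trig_poly Q"
  unfolding is_trig_poly_def by auto

lemma is_trig_poly_mult:
  assumes "is_trig_poly P" "is_trig_poly Q"
  shows "is_trig_poly (\<lambda>z. P z * Q z)"
proof -
  obtain D a where a: "band_limited D a" "\<forall>z\<in>sphere 0 1. P z = trig_poly D a z"
    using assms(1) is_trig_poly_def by auto
  obtain E b where b: "band_limited E b" "\<forall>z\<in>sphere 0 1. Q z = trig_poly E b z"
    using assms(2) is_trig_poly_def by auto
  let ?R = "\<lambda>z. \<Sum>j\<in>{-int D..int D}. \<Sum>k\<in>{-int E..int E}. (a j * b k) * z powi (j + k)"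
  have "is_trig_poly ?R" by (intro is_trig_poly_sum is_trig_poly_monomial) auto
  moreover have "?R z = P z * Q z" if "z \<in> sphere 0 1" for z
  proof -
    have z: "z \<noteq> 0" using that by auto
    have "P z * Q z = trig_poly D a z * trig_poly E b z" using a b that by simp
    also have "\<dots> = ?R z"
      by (simp add: trig_poly_def sum_product power_int_add[OF disjI1[OF z]] mult_ac)
    finally show ?thesis by simp
  qed
  ultimately show ?thesis by (rule is_trig_poly_cong)
qed

lemma is_trig_poly_id: "is_trig_poly (\<lambda>z. z)"
  using is_trig_poly_monomial[of 1 1] by simp

lemma is_trig_poly_cnj: "is_trig_poly (\<lambda>z. cnj z)"
proof -
  have "is_trig_poly (\<lambda>z. 1 * z powi (-1))" by (rule is_trig_poly_monomial)
  moreover have "1 * z powi (-1) = cnj z" if "z \<in> sphere 0 1" for z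
  proof -
    have "z * cnj z = 1" using that complex_norm_square[of z] by simp
    then have "inverse z = cnj z" by (rule inverse_unique)
    then show ?thesis by (simp add: power_int_minus)
  qed
  ultimately show ?thesis by (rule is_trig_poly_cong)
qed

text \<open>A real-linear map \<open>g\<close> is \<open>Re z \<cdot> g 1 + Im z \<cdot> g \<i>\<close>, a combination of \<open>z\<close> and \<open>cnj z\<close>.\<close>

lemma is_trig_poly_linear:
  assumes "bounded_linear g"
  shows "is_trig_poly (\<lambda>z. complex_of_real (g z))"
proof -
  interpret linear g using assms bounded_linear.linear by blast
  have g_eq: "g z = Re z * g 1 + Im z * g \<i>" for z
  proof -
    have "z = Re z *\<^sub>R 1 + Im z *\<^sub>R \<i>" by (simp add: complex_eq_iff)
    then have "g z = g (Re z *\<^sub>R 1 + Im z *\<^sub>R \<i>)" by simp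
    then show ?thesis by (simp add: add scale)
  qed
  define u where "u = complex_of_real (g 1)"
  define v where "v = complex_of_real (g \<i>)"
  let ?Q = "\<lambda>z. (u/2) * z + (u/2) * cnj z + (v/(2*\<i>)) * z + (-(v/(2*\<i>))) * cnj z"
  have "is_trig_poly ?Q"
    by (intro is_trig_poly_add is_trig_poly_cmult is_trig_poly_id is_trig_poly_cnj)
  then show ?thesis
  proof (rule is_trig_poly_cong)
    fix z :: complex
    have re: "z + cnj z = 2 * complex_of_real (Re z)" and im: "z - cnj z = 2 * \<i> * complex_of_real (Im z)"
      by (simp_all add: complex_eq_iff)
    have "?Q z = (u/2) * (z + cnj z) + (v/(2*\<i>)) * (z - cnj z)"
      by (simp only: ring_distribs) simp
    also have "\<dots> = u * complex_of_real (Re z) + v * complex_of_real (Im z)"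
      by (simp add: re im algebra_simps)
    also have "\<dots> = complex_of_real (g z)" unfolding u_def v_def by (subst g_eq[of z]) simp
    finally show "?Q z = complex_of_real (g z)" .
  qed
qed

lemma is_trig_poly_real_polynomial:
  assumes "real_polynomial_function g"
  shows "is_trig_poly (\<lambda>z. complex_of_real (g z))"
  using assms
proof (induction rule: real_polynomial_function.induct)
  case (linear f) then show ?case by (rule is_trig_poly_linear)
next
  case (const c) then show ?case by (rule is_trig_poly_const)
next
  case (add f g) then show ?case by (simp add: is_trig_poly_add)
next
  case (mult f g) then show ?case by (simp add: is_trig_poly_mult)
qed

text \<open>Density: approximate \<open>Re h\<close> and \<open>Im h\<close> by real polynomials (Stone--Weierstrass).\<close>

lemma trig_poly_approx:
  assumes h: "circle_continuous h" and e: "e > 0"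
  obtains D a where "band_limited D a" "\<And>z. z \<in> sphere 0 1 \<Longrightarrow> norm (h z - trig_poly D a z) \<le> e"
proof -
  have re: "continuous_on (sphere 0 1) (\<lambda>z. Re (h z))"
    and im: "continuous_on (sphere 0 1) (\<lambda>z. Im (h z))"
    using h by (auto intro: continuous_intros)
  obtain g1 where g1: "real_polynomial_function g1" "\<And>z. z \<in> sphere 0 1 \<Longrightarrow> \<bar>Re (h z) - g1 z\<bar> < e/2"
    using Stone_Weierstrass_real_polynomial_function[OF compact_sphere re, of "e/2"] e by auto
  obtain g2 where g2: "real_polynomial_function g2" "\<And>z. z \<in> sphere 0 1 \<Longrightarrow> \<bar>Im (h z) - g2 z\<bar> < e/2"
    using Stone_Weierstrass_real_polynomial_function[OF compact_sphere im, of "e/2"] e by auto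
  have "is_trig_poly (\<lambda>z. complex_of_real (g1 z) + \<i> * complex_of_real (g2 z))"
    by (intro is_trig_poly_add is_trig_poly_cmult is_trig_poly_real_polynomial g1 g2)
  then obtain D a where a: "band_limited D a"
      "\<forall>z\<in>sphere 0 1. complex_of_real (g1 z) + \<i> * complex_of_real (g2 z) = trig_poly D a z"
    unfolding is_trig_poly_def by blast
  have "norm (h z - trig_poly D a z) \<le> e" if z: "z \<in> sphere 0 1" for z
  proof -
    have "h z - trig_poly D a z = complex_of_real (Re (h z) - g1 z) + \<i> * complex_of_real (Im (h z) - g2 z)"
      using a(2) z by (simp add: complex_eq_iff)
    also have "norm \<dots> \<le> \<bar>Re (h z) - g1 z\<bar> + \<bar>Im (h z) - g2 z\<bar>"
      by (rule order_trans[OF norm_triangle_ineq]) (simp add: norm_mult del: of_real_diff)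
    also have "\<dots> \<le> e" using g1(2)[OF z] g2(2)[OF z] by simp
    finally show ?thesis .
  qed
  with a(1) show ?thesis using that by blast
qed

lemma fourier_coeff_trig_poly:
  "fourier_coeff (trig_poly D a) m = (if m \<in> {-int D..int D} then a m else 0)"
proof -
  have "fourier_coeff (trig_poly D a) m = (\<Sum>j\<in>{-int D..int D}. fourier_coeff (\<lambda>z. a j * z powi j) m)"
    unfolding trig_poly_def by (rule fourier_coeff_sum) (auto intro!: continuous_intros)
  also have "\<dots> = (\<Sum>j\<in>{-int D..int D}. if j = m then a j else 0)"
    by (rule sum.cong) (auto simp: fourier_coeff_cmult fourier_coeff_power_int)
  finally show ?thesis by simp
qed

lemma fourier_coeff_band_limited: "band_limited D a \<Longrightarrow> fourier_coeff (trig_poly D a) m = a m"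
  by (auto simp: fourier_coeff_trig_poly band_limited_def)

lemma fourier_coeff_cnj_trig_poly_mult:
  assumes g: "circle_continuous g"
  shows "fourier_coeff (\<lambda>z. cnj (trig_poly D a z) * g z) m
           = (\<Sum>j\<in>{-int D..int D}. cnj (a j) * fourier_coeff g (m + j))"
proof -
  have "fourier_coeff (\<lambda>z. cnj (trig_poly D a z) * g z) m
      = fourier_coeff (\<lambda>z. \<Sum>j\<in>{-int D..int D}. cnj (a j) * (z powi (-j) * g z)) m"
    by (rule fourier_coeff_cong)
       (simp add: trig_poly_def sum_distrib_left sum_distrib_right cis_power_int cis_cnj mult_ac)
  also have "\<dots> = (\<Sum>j\<in>{-int D..int D}. cnj (a j) * fourier_coeff g (m + j))"
    by (subst fourier_coeff_sum)
       (auto intro!: continuous_intros g simp: fourier_coeff_cmult fourier_coeff_shift)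
  finally show ?thesis .
qed

lemma fourier_coeff_trig_poly_mult_cnj:
  assumes g: "circle_continuous g"
  shows "fourier_coeff (\<lambda>z. trig_poly D a z * cnj (g z)) m
           = (\<Sum>j\<in>{-int D..int D}. a j * cnj (fourier_coeff g (j - m)))"
proof -
  have "fourier_coeff (\<lambda>z. trig_poly D a z * cnj (g z)) m
      = fourier_coeff (\<lambda>z. \<Sum>j\<in>{-int D..int D}. a j * (z powi j * cnj (g z))) m"
    by (rule fourier_coeff_cong) (simp add: trig_poly_def sum_distrib_left sum_distrib_right mult_ac)
  also have "\<dots> = (\<Sum>j\<in>{-int D..int D}. a j * cnj (fourier_coeff g (j - m)))"
    by (subst fourier_coeff_sum)
       (auto intro!: continuous_intros g simp: fourier_coeff_cmult fourier_coeff_shift fourier_coeff_cnj)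
  finally show ?thesis .
qed

lemma band_limited_finite_support:
  assumes "band_limited D a"
  shows "finite {m. a m \<noteq> 0}"
proof (rule finite_subset)
  show "{m. a m \<noteq> 0} \<subseteq> {-int D..int D}"
  proof
    fix m assume "m \<in> {m. a m \<noteq> 0}"
    then have "\<not> int D < \<bar>m\<bar>" using assms by (auto simp: band_limited_def)
    then show "m \<in> {-int D..int D}" by auto
  qed
qed simp

lemma fourier_coeff_trig_poly_norm_sq:
  assumes a: "band_limited D a" and m: "2 * int D < \<bar>m\<bar>"
  shows "fourier_coeff (\<lambda>z. trig_poly D a z * cnj (trig_poly D a z)) m = 0"
proof -
  have "fourier_coeff (\<lambda>z. trig_poly D a z * cnj (trig_poly D a z)) m
      = (\<Sum>j\<in>{-int D..int D}. a j * cnj (a (j - m)))"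
    by (simp add: fourier_coeff_trig_poly_mult_cnj[OF circle_continuous_trig_poly] fourier_coeff_band_limited[OF a])
  also have "\<dots> = 0"
    by (rule sum.neutral) (use a m in \<open>auto simp: band_limited_def\<close>)
  finally show ?thesis .
qed

text \<open>The mean square \<open>\<parallel>h\<parallel>\<^sup>2 = (2\<pi>)\<^sup>-\<^sup>1 \<integral> |h|\<^sup>2\<close> and Parseval's identity
  \<open>\<Sum>\<^sub>m |\<hat>h(m)|\<^sup>2 = \<parallel>h\<parallel>\<^sup>2\<close> for continuous \<open>h\<close>: expanding \<open>\<parallel>h - P\<parallel>\<^sup>2\<close> for a
  trigonometric polynomial \<open>P\<close> gives Bessel's inequality, and the density of
  trigonometric polynomials gives the reverse bound.\<close>

definition mean_square :: "(complex \<Rightarrow> complex) \<Rightarrow> real" where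
  "mean_square h = circle_mean_real (\<lambda>z. (cmod (h z))^2)"

lemma circle_continuous_norm_sq: "circle_continuous h \<Longrightarrow> circle_continuous (\<lambda>z. (cmod (h z))^2)"
  by (intro continuous_intros)

lemma mean_square_circle_mean:
  assumes h: "circle_continuous h"
  shows "complex_of_real (mean_square h) = circle_mean (\<lambda>z. h z * cnj (h z))"
proof -
  have "complex_of_real (mean_square h) = circle_mean (\<lambda>z. complex_of_real ((cmod (h z))^2))"
    unfolding mean_square_def by (rule circle_mean_of_real[OF circle_continuous_norm_sq[OF h], symmetric])
  also have "\<dots> = circle_mean (\<lambda>z. h z * cnj (h z))"
    by (rule circle_mean_cong) (rule complex_norm_square)
  finally show ?thesis .
qed

lemma mean_square_nonneg: "circle_continuous h \<Longrightarrow> 0 \<le> mean_square h"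
  unfolding mean_square_def
  using circle_mean_real_mono[of "\<lambda>z. 0" "\<lambda>z. (cmod (h z))^2"] circle_continuous_norm_sq[of h]
  by (simp add: circle_mean_real_const)

lemma mean_square_bound:
  "circle_continuous h \<Longrightarrow> (\<And>z. z \<in> sphere 0 1 \<Longrightarrow> cmod (h z) \<le> e) \<Longrightarrow> mean_square h \<le> e^2"
  unfolding mean_square_def
  using circle_mean_real_mono[of "\<lambda>z. (cmod (h z))^2" "\<lambda>z. e^2"] circle_continuous_norm_sq[of h]
  by (simp add: circle_mean_real_const power_mono)

lemma mean_square_le:
  assumes "circle_continuous g" "circle_continuous g1" "circle_continuous g2" "0 \<le> \<alpha>" "0 \<le> \<beta>"
    and "\<And>z. z \<in> sphere 0 1 \<Longrightarrow> (cmod (g z))^2 \<le> \<alpha> * (cmod (g1 z))^2 + \<beta> * (cmod (g2 z))^2"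
  shows "mean_square g \<le> \<alpha> * mean_square g1 + \<beta> * mean_square g2"
proof -
  have "mean_square g \<le> circle_mean_real (\<lambda>z. \<alpha> * (cmod (g1 z))^2 + \<beta> * (cmod (g2 z))^2)"
    unfolding mean_square_def
    by (rule circle_mean_real_mono) (use assms in \<open>auto intro!: continuous_intros\<close>)
  also have "\<dots> = \<alpha> * mean_square g1 + \<beta> * mean_square g2"
    by (subst circle_mean_real_add)
       (use assms in \<open>auto intro!: continuous_intros simp: circle_mean_real_cmult mean_square_def\<close>)
  finally show ?thesis .
qed

lemma circle_mean_mult_cnj_trig_poly:
  assumes h: "circle_continuous h"
  shows "circle_mean (\<lambda>z. h z * cnj (trig_poly D a z)) = (\<Sum>j\<in>{-int D..int D}. cnj (a j) * fourier_coeff h j)"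
  using fourier_coeff_cnj_trig_poly_mult[OF h, of D a 0]
  by (simp add: fourier_coeff_circle_mean mult.commute)

lemma mean_square_diff_trig_poly:
  assumes h: "circle_continuous h"
  shows "mean_square (\<lambda>z. h z - trig_poly D a z)
           = mean_square h - (\<Sum>m\<in>{-int D..int D}. (cmod (fourier_coeff h m))^2)
             + (\<Sum>m\<in>{-int D..int D}. (cmod (fourier_coeff h m - a m))^2)"
proof -
  let ?I = "{-int D..int D}" and ?P = "trig_poly D a" and ?c = "fourier_coeff h"
  define S where "S = (\<Sum>j\<in>?I. cnj (a j) * ?c j)"
  have cP: "circle_continuous ?P" by (rule circle_continuous_trig_poly)
  have hP: "circle_mean (\<lambda>z. h z * cnj (?P z)) = S"
    unfolding S_def by (rule circle_mean_mult_cnj_trig_poly[OF h])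
  have Ph: "circle_mean (\<lambda>z. ?P z * cnj (h z)) = cnj S"
  proof -
    have "circle_mean (\<lambda>z. ?P z * cnj (h z)) = circle_mean (\<lambda>z. cnj (h z * cnj (?P z)))"
      by (rule circle_mean_cong) simp
    then show ?thesis by (simp only: circle_mean_cnj hP)
  qed
  have PP: "circle_mean (\<lambda>z. ?P z * cnj (?P z)) = (\<Sum>j\<in>?I. cnj (a j) * a j)"
    by (simp add: circle_mean_mult_cnj_trig_poly[OF cP] fourier_coeff_trig_poly)
  have norm_sq: "(complex_of_real (cmod w))^2 = w * cnj w" for w
    by (metis complex_norm_square of_real_power)
  have "complex_of_real (mean_square (\<lambda>z. h z - ?P z))
      = circle_mean (\<lambda>z. (h z - ?P z) * cnj (h z - ?P z))"
    by (rule mean_square_circle_mean) (intro continuous_intros h cP)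
  also have "\<dots> = circle_mean (\<lambda>z. ((h z * cnj (h z) - h z * cnj (?P z)) - ?P z * cnj (h z)) + ?P z * cnj (?P z))"
    by (rule circle_mean_cong) (simp add: algebra_simps)
  also have "\<dots> = circle_mean (\<lambda>z. h z * cnj (h z)) - circle_mean (\<lambda>z. h z * cnj (?P z))
                   - circle_mean (\<lambda>z. ?P z * cnj (h z)) + circle_mean (\<lambda>z. ?P z * cnj (?P z))"
    by (subst circle_mean_add circle_mean_diff; (intro continuous_intros h cP)?)+ (rule refl)
  also have "\<dots> = complex_of_real (mean_square h) - S - cnj S + (\<Sum>j\<in>?I. cnj (a j) * a j)"
    by (simp add: mean_square_circle_mean[OF h] hP Ph PP)
  also have "\<dots> = complex_of_real (mean_square h) + (\<Sum>j\<in>?I. cnj (a j) * a j - cnj (a j) * ?c j - a j * cnj (?c j))"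
    by (simp add: S_def sum_subtractf)
  also have "\<dots> = complex_of_real (mean_square h) + (\<Sum>j\<in>?I. (?c j - a j) * cnj (?c j - a j) - ?c j * cnj (?c j))"
    by (rule arg_cong[where f="\<lambda>x. _ + x"], rule sum.cong) (auto simp: algebra_simps)
  also have "\<dots> = complex_of_real (mean_square h - (\<Sum>m\<in>?I. (cmod (?c m))^2) + (\<Sum>m\<in>?I. (cmod (?c m - a m))^2))"
    by (simp add: norm_sq sum_subtractf)
  finally show ?thesis by (simp only: of_real_eq_iff)
qed

text \<open>Bessel's inequality, from the expansion with \<open>a = \<hat>h\<close>.\<close>

lemma bessel:
  assumes h: "circle_continuous h" and F: "finite F"
  shows "(\<Sum>m\<in>F. (cmod (fourier_coeff h m))^2) \<le> mean_square h"
proof -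
  obtain D where D: "F \<subseteq> {-int D..int D}" using finite_int_set_bounded[OF F] .
  have "(\<Sum>m\<in>F. (cmod (fourier_coeff h m))^2) \<le> (\<Sum>m\<in>{-int D..int D}. (cmod (fourier_coeff h m))^2)"
    using D by (intro sum_mono2) auto
  also have "\<dots> \<le> mean_square h"
    using mean_square_diff_trig_poly[OF h, of D "fourier_coeff h"]
          mean_square_nonneg[of "\<lambda>z. h z - trig_poly D (fourier_coeff h) z"]
          h circle_continuous_trig_poly[of D "fourier_coeff h"]
    by (auto intro: continuous_intros)
  finally show ?thesis .
qed

text \<open>Parseval: partial sums over large windows come within \<open>\<epsilon>\<^sup>2\<close> of \<open>\<parallel>h\<parallel>\<^sup>2\<close> as soon as a
  trigonometric polynomial approximates \<open>h\<close> uniformly within \<open>\<epsilon>\<close>.\<close>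

theorem parseval:
  assumes h: "circle_continuous h"
  shows "((\<lambda>m. (cmod (fourier_coeff h m))^2) has_sum mean_square h) UNIV"
  unfolding has_sum_def
proof (subst order_tendsto_iff, safe)
  fix u assume "mean_square h < u"
  then show "\<forall>\<^sub>F F in finite_subsets_at_top UNIV. sum (\<lambda>m. (cmod (fourier_coeff h m))^2) F < u"
    using bessel[OF h] by (intro eventually_finite_subsets_at_top_weakI) (meson le_less_trans)
next
  fix l assume l: "l < mean_square h"
  define e where "e = sqrt (mean_square h - l) / 2"
  have e0: "e > 0" using l by (simp add: e_def)
  have e2: "e^2 < mean_square h - l" using l by (simp add: e_def power_divide)
  obtain D a where a: "band_limited D a" "\<And>z. z \<in> sphere 0 1 \<Longrightarrow> norm (h z - trig_poly D a z) \<le> e"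
    using trig_poly_approx[OF h e0] by blast
  have "mean_square (\<lambda>z. h z - trig_poly D a z) \<le> e^2"
    by (rule mean_square_bound) (use a h in \<open>auto intro: continuous_intros circle_continuous_trig_poly\<close>)
  then have partial: "mean_square h - (\<Sum>m\<in>{-int D..int D}. (cmod (fourier_coeff h m))^2) \<le> e^2"
    using mean_square_diff_trig_poly[OF h, of D a]
          sum_nonneg[of "{-int D..int D}" "\<lambda>m. (cmod (fourier_coeff h m - a m))^2"] by simp
  show "\<forall>\<^sub>F F in finite_subsets_at_top UNIV. l < sum (\<lambda>m. (cmod (fourier_coeff h m))^2) F"
    unfolding eventually_finite_subsets_at_top
  proof (intro exI[of _ "{-int D..int D}"] conjI allI impI)
    fix Y assume Y: "finite Y \<and> {-int D..int D} \<subseteq> Y \<and> Y \<subseteq> UNIV"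
    have "(\<Sum>m\<in>{-int D..int D}. (cmod (fourier_coeff h m))^2) \<le> sum (\<lambda>m. (cmod (fourier_coeff h m))^2) Y"
      using Y by (intro sum_mono2) auto
    then show "l < sum (\<lambda>m. (cmod (fourier_coeff h m))^2) Y" using partial e2 by linarith
  qed auto
qed

text \<open>Riemann--Lebesgue for continuous functions, in the weak form needed later: by Bessel's
  inequality only finitely many coefficients can exceed a given \<open>\<eta> > 0\<close>.\<close>

lemma fourier_coeff_eventually_small:
  assumes h: "circle_continuous h" and eta: "0 < \<eta>"
  obtains N :: int where "\<And>m. N \<le> \<bar>m\<bar> \<Longrightarrow> cmod (fourier_coeff h m) \<le> \<eta>"
proof -
  define S where "S = {m. \<eta> < cmod (fourier_coeff h m)}"
  have "finite S"
  proof (rule ccontr)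
    assume inf: "infinite S"
    define n where "n = nat (ceiling (mean_square h / \<eta>^2)) + 1"
    obtain B where B: "finite B" "card B = n" "B \<subseteq> S"
      using infinite_arbitrarily_large[OF inf] by blast
    have "(\<Sum>m\<in>B. \<eta>^2) \<le> (\<Sum>m\<in>B. (cmod (fourier_coeff h m))^2)"
    proof (rule sum_mono)
      fix m assume "m \<in> B"
      then have "\<eta> < cmod (fourier_coeff h m)" using B(3) by (auto simp: S_def)
      then show "\<eta>^2 \<le> (cmod (fourier_coeff h m))^2" using eta by (intro power_mono) auto
    qed
    also have "\<dots> \<le> mean_square h" by (rule bessel[OF h B(1)])
    finally have "real n * \<eta>^2 \<le> mean_square h" using B(2) by simp
    moreover have "mean_square h / \<eta>^2 < real n" unfolding n_def by linarith
    then have "mean_square h < real n * \<eta>^2" using eta by (simp add: field_simps)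
    ultimately show False by linarith
  qed
  then obtain K where K: "S \<subseteq> {-int K..int K}" by (rule finite_int_set_bounded)
  show ?thesis
  proof (rule that[of "int K + 1"])
    fix m :: int assume "int K + 1 \<le> \<bar>m\<bar>"
    then have "m \<notin> {-int K..int K}" by auto
    then have "m \<notin> S" using K by blast
    then show "cmod (fourier_coeff h m) \<le> \<eta>" by (simp add: S_def)
  qed
qed

text \<open>On the Fourier side \<open>\<Delta>\<^sub>t\<close> multiplies
  the \<open>m\<close>-th coefficient by \<open>e\<^sup>i\<^sup>m\<^sup>t - 1\<close>, so by Parseval
  \<open>\<parallel>\<Delta>\<^sub>t g\<parallel>\<^sup>2 = \<Sum>\<^sub>m w\<^sub>t(m) |\<hat>g(m)|\<^sup>2\<close> with the weight \<open>w\<^sub>t(m) = |e\<^sup>i\<^sup>m\<^sup>t - 1|\<^sup>2 = 2 - 2 cos(mt)\<close>.\<close>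

definition diff_weight :: "real \<Rightarrow> int \<Rightarrow> real" where
  "diff_weight t m = (cmod (cis (of_int m * t) - 1))^2"

definition rot_diff :: "real \<Rightarrow> (complex \<Rightarrow> complex) \<Rightarrow> complex \<Rightarrow> complex" where
  "rot_diff t g z = g (cis t * z) - g z"

lemma cis_minus_one_norm_sq: "(cmod (cis x - 1))^2 = 2 - 2 * cos x"
proof -
  have "(cmod (cis x - 1))^2 = (cos x - 1)^2 + (sin x)^2"
    by (simp add: cmod_def cis.code)
  also have "\<dots> = 2 - 2 * cos x"
    using sin_cos_squared_add[of x] by (simp add: power2_eq_square algebra_simps)
  finally show ?thesis .
qed

lemma cis_minus_one_norm_le: "cmod (cis x - 1) \<le> \<bar>x\<bar>"
proof -
  have c: "cos x = 1 - 2 * (sin (x/2))^2" using cos_double_sin[of "x/2"] by simp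
  have "(sin (x/2))^2 \<le> (x/2)^2"
    using abs_sin_x_le_abs_x[of "x/2"] by (metis abs_ge_zero power2_abs power_mono)
  then have "(cmod (cis x - 1))^2 \<le> x^2" by (simp add: cis_minus_one_norm_sq c power_divide)
  then show ?thesis by (metis abs_ge_zero power2_abs power2_le_imp_le)
qed

lemma diff_weight_eq: "diff_weight t m = 2 - 2 * cos (of_int m * t)"
  unfolding diff_weight_def by (rule cis_minus_one_norm_sq)

lemma diff_weight_nonneg: "0 \<le> diff_weight t m"
  by (simp add: diff_weight_def)

lemma diff_weight_le_4: "diff_weight t m \<le> 4"
  unfolding diff_weight_eq using cos_ge_minus_one[of "of_int m * t"] by linarith

lemma diff_weight_le_sq: "diff_weight t m \<le> (of_int m * t)^2"
  unfolding diff_weight_def using cis_minus_one_norm_le[of "of_int m * t"]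
  by (metis abs_ge_zero norm_ge_zero power2_abs power_mono)

lemma diff_weight_zero: "diff_weight t 0 = 0"
  by (simp add: diff_weight_def)

lemma cis_mult_sphere: "z \<in> sphere 0 1 \<Longrightarrow> cis t * z \<in> sphere 0 1"
  by (simp add: norm_mult)

lemma circle_continuous_rot_diff: "circle_continuous g \<Longrightarrow> circle_continuous (rot_diff t g)"
  unfolding rot_diff_def by (intro continuous_intros circle_continuous_rotate)

lemma fourier_coeff_rot_diff:
  assumes g: "circle_continuous g" and t: "0 \<le> t" "t \<le> 2*pi"
  shows "fourier_coeff (rot_diff t g) m = (cis (of_int m * t) - 1) * fourier_coeff g m"
proof -
  have "fourier_coeff (rot_diff t g) m = fourier_coeff (\<lambda>z. g (cis t * z)) m - fourier_coeff g m"
    unfolding rot_diff_def by (rule fourier_coeff_diff[OF circle_continuous_rotate[OF g] g])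
  also have "\<dots> = (cis (of_int m * t) - 1) * fourier_coeff g m"
    unfolding fourier_coeff_rotate[OF g t] by (simp add: algebra_simps)
  finally show ?thesis .
qed

lemma parseval_rot_diff:
  assumes "circle_continuous g" "0 \<le> t" "t \<le> 2*pi"
  shows "((\<lambda>m. diff_weight t m * (cmod (fourier_coeff g m))^2) has_sum mean_square (rot_diff t g)) UNIV"
  using parseval[OF circle_continuous_rot_diff[OF assms(1), of t]]
  by (simp add: fourier_coeff_rot_diff assms diff_weight_def norm_mult power_mult_distrib)

lemma trig_poly_lipschitz:
  assumes z: "z \<in> sphere 0 1" and t: "0 \<le> t"
  shows "cmod (trig_poly D a (cis t * z) - trig_poly D a z)
           \<le> (\<Sum>j\<in>{-int D..int D}. cmod (a j) * \<bar>of_int j\<bar>) * t"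
proof -
  have "trig_poly D a (cis t * z) - trig_poly D a z
      = (\<Sum>j\<in>{-int D..int D}. a j * z powi j * (cis (of_int j * t) - 1))"
    by (simp add: trig_poly_def power_int_mult_distrib cis_power_int sum_subtractf[symmetric] algebra_simps)
  also have "cmod \<dots> \<le> (\<Sum>j\<in>{-int D..int D}. cmod (a j * z powi j * (cis (of_int j * t) - 1)))"
    by (rule norm_sum)
  also have "\<dots> \<le> (\<Sum>j\<in>{-int D..int D}. cmod (a j) * \<bar>of_int j\<bar> * t)"
  proof (rule sum_mono)
    fix j
    have "cmod (cis (of_int j * t) - 1) \<le> \<bar>of_int j\<bar> * t"
      using cis_minus_one_norm_le[of "of_int j * t"] t by (simp add: abs_mult)
    then show "cmod (a j * z powi j * (cis (of_int j * t) - 1)) \<le> cmod (a j) * \<bar>of_int j\<bar> * t"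
      using z by (simp add: norm_mult norm_power_int mult.assoc mult_left_mono)
  qed
  finally show ?thesis by (simp add: sum_distrib_right)
qed

lemma sq_le_two_sq_sum:
  fixes x y z :: real
  assumes "x \<le> y + z" "0 \<le> x" "0 \<le> y" "0 \<le> z"
  shows "x^2 \<le> 2*y^2 + 2*z^2"
proof -
  have "x^2 \<le> (y+z)^2" using assms by (simp add: power_mono)
  also have "\<dots> \<le> 2*y^2 + 2*z^2"
    using sum_squares_ge_zero[of "y-z" 0] by (simp add: power2_eq_square algebra_simps)
  finally show ?thesis .
qed

lemma norm_diff_sq_le: "(cmod (x - y))^2 \<le> 2 * (cmod x)^2 + 2 * (cmod y)^2"
  by (rule sq_le_two_sq_sum) (auto intro: norm_triangle_ineq4)

lemma le_of_forall_pos_sq_error: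
  fixes x y c :: real
  assumes c: "0 \<le> c" and le: "\<And>\<eta>. 0 < \<eta> \<Longrightarrow> x \<le> y + c * \<eta>^2"
  shows "x \<le> y"
proof (rule field_le_epsilon)
  fix \<epsilon> :: real assume e: "0 < \<epsilon>"
  define \<eta> where "\<eta> = sqrt (\<epsilon> / (c + 1))"
  have "0 < \<eta>" using c e by (simp add: \<eta>_def)
  moreover have "c * \<eta>^2 \<le> \<epsilon>"
    using c e by (simp add: \<eta>_def field_simps)
  ultimately show "x \<le> y + \<epsilon>" using le by fastforce
qed

lemma weighted_sq_summable_finite_perturb:
  fixes u b :: "'a \<Rightarrow> complex" and c :: "'a \<Rightarrow> real"
  assumes u: "(\<lambda>m. c m * (cmod (u m))^2) summable_on A"
    and b: "finite {m. b m \<noteq> 0}" and c: "\<And>m. 0 \<le> c m"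
  shows "(\<lambda>m. c m * (cmod (u m - b m))^2) summable_on A"
proof (rule summable_on_comparison_test)
  have "(\<lambda>m. c m * (cmod (b m))^2) summable_on A"
    by (rule finite_nonzero_values_imp_summable_on) (rule finite_subset[OF _ b], auto)
  then show "(\<lambda>m. 2 * (c m * (cmod (u m))^2) + 2 * (c m * (cmod (b m))^2)) summable_on A"
    by (intro summable_on_add summable_on_cmult_right u)
next
  fix m
  have "c m * (cmod (u m - b m))^2 \<le> c m * (2 * (cmod (u m))^2 + 2 * (cmod (b m))^2)"
    using c norm_diff_sq_le by (intro mult_left_mono) auto
  then show "c m * (cmod (u m - b m))^2 \<le> 2 * (c m * (cmod (u m))^2) + 2 * (c m * (cmod (b m))^2)"
    by (simp add: algebra_simps)
qed (use c in auto)

text \<open>The unimodularity \<open>|P + r|\<^sup>2 = 1\<close> couples the two halves of the spectrum: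
  the function \<open>cnj P \<cdot> r\<^sup>- + P \<cdot> cnj r\<^sup>+\<close> agrees, in a middle frequency window, with
  the Fourier coefficients of \<open>-|r|\<^sup>2\<close>, which is small because \<open>r\<close> is.\<close>

locale unimodular_approx =
  fixes f :: "complex \<Rightarrow> complex" and D :: nat and a :: "int \<Rightarrow> complex"
  assumes f_cont: "circle_continuous f"
    and f_unimodular: "\<And>z. z \<in> sphere 0 1 \<Longrightarrow> cmod (f z) = 1"
    and a_band: "band_limited D a"
    and approx: "\<And>z. z \<in> sphere 0 1 \<Longrightarrow> cmod (f z - trig_poly D a z) \<le> 1/16"
begin

abbreviation "P \<equiv> trig_poly D a"
abbreviation "I\<^sub>D \<equiv> {-int D..int D}"

definition r :: "complex \<Rightarrow> complex" where "r z = f z - P z"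

definition neg_coeff :: "nat \<Rightarrow> int \<Rightarrow> complex" where
  "neg_coeff K m = (if m \<in> {-int K..-1} then fourier_coeff r m else 0)"

definition pos_coeff :: "nat \<Rightarrow> int \<Rightarrow> complex" where
  "pos_coeff K m = (if m \<in> {1..int K} then fourier_coeff r m else 0)"

definition r_neg :: "nat \<Rightarrow> complex \<Rightarrow> complex" where "r_neg K = trig_poly K (neg_coeff K)"
definition r_pos :: "nat \<Rightarrow> complex \<Rightarrow> complex" where "r_pos K = trig_poly K (pos_coeff K)"

definition cross :: "nat \<Rightarrow> complex \<Rightarrow> complex" where
  "cross K z = cnj (P z) * r_neg K z + P z * cnj (r_pos K z)"

definition r_sq :: "complex \<Rightarrow> complex" where "r_sq z = complex_of_real ((cmod (r z))^2)"

definition lip :: real where "lip = (\<Sum>j\<in>I\<^sub>D. cmod (a j) * \<bar>of_int j\<bar>)"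
definition coeff_l1 :: real where "coeff_l1 = (\<Sum>j\<in>I\<^sub>D. cmod (a j))"

lemma P_cont: "circle_continuous P" by (rule circle_continuous_trig_poly)
lemma r_cont: "circle_continuous r" unfolding r_def by (intro continuous_intros f_cont P_cont)
lemma r_neg_cont: "circle_continuous (r_neg K)" unfolding r_neg_def by (rule circle_continuous_trig_poly)
lemma r_pos_cont: "circle_continuous (r_pos K)" unfolding r_pos_def by (rule circle_continuous_trig_poly)
lemma r_sq_cont: "circle_continuous r_sq" unfolding r_sq_def by (intro continuous_intros r_cont)
lemma cross_cont: "circle_continuous (cross K)"
  unfolding cross_def by (intro continuous_intros P_cont r_neg_cont r_pos_cont)

lemma lip_nonneg: "0 \<le> lip" unfolding lip_def by (intro sum_nonneg) auto

lemma r_small: "z \<in> sphere 0 1 \<Longrightarrow> cmod (r z) \<le> 1/16"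
  unfolding r_def by (rule approx)

lemma P_lower: "z \<in> sphere 0 1 \<Longrightarrow> 15/16 \<le> cmod (P z)"
  using f_unimodular[of z] approx[of z] norm_triangle_ineq2[of "f z" "P z"] by simp

lemma P_upper: "z \<in> sphere 0 1 \<Longrightarrow> cmod (P z) \<le> 17/16"
  using f_unimodular[of z] approx[of z] norm_triangle_ineq3[of "f z" "P z"] by simp

lemma P_lipschitz: "z \<in> sphere 0 1 \<Longrightarrow> 0 \<le> t \<Longrightarrow> cmod (P (cis t * z) - P z) \<le> lip * t"
  unfolding lip_def by (rule trig_poly_lipschitz)

lemma r_coeff_small: "cmod (fourier_coeff r m) \<le> 1/16"
  by (rule fourier_coeff_bound[OF r_cont r_small])

lemma neg_coeff_small: "cmod (neg_coeff K m) \<le> 1/16"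
  unfolding neg_coeff_def using r_coeff_small by auto

lemma pos_coeff_small: "cmod (pos_coeff K m) \<le> 1/16"
  unfolding pos_coeff_def using r_coeff_small by auto

lemma fourier_coeff_r_neg: "fourier_coeff (r_neg K) m = neg_coeff K m"
  unfolding r_neg_def by (rule fourier_coeff_band_limited) (auto simp: band_limited_def neg_coeff_def)

lemma fourier_coeff_r_pos: "fourier_coeff (r_pos K) m = pos_coeff K m"
  unfolding r_pos_def by (rule fourier_coeff_band_limited) (auto simp: band_limited_def pos_coeff_def)

lemma fourier_coeff_r: "fourier_coeff r m = fourier_coeff f m - a m"
  unfolding r_def by (simp add: fourier_coeff_diff[OF f_cont P_cont] fourier_coeff_band_limited[OF a_band])

lemma mean_square_r: "mean_square r \<le> 1"
proof -
  have "mean_square r \<le> (1/16)^2" by (rule mean_square_bound[OF r_cont r_small])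
  then show ?thesis by (simp add: power2_eq_square)
qed

text \<open>The pieces \<open>r\<^sup>\<plusminus>\<^sub>K\<close> have part of the spectrum of \<open>r\<close>, so by Parseval \<open>\<parallel>r\<^sup>\<plusminus>\<^sub>K\<parallel> \<le> \<parallel>r\<parallel> \<le> 1\<close>.\<close>

lemma mean_square_r_neg: "mean_square (r_neg K) \<le> 1"
proof -
  have "mean_square (r_neg K) \<le> mean_square r"
    by (rule has_sum_mono[OF parseval[OF r_neg_cont] parseval[OF r_cont]])
       (auto simp: fourier_coeff_r_neg neg_coeff_def)
  then show ?thesis using mean_square_r by simp
qed

lemma mean_square_r_pos: "mean_square (r_pos K) \<le> 1"
proof -
  have "mean_square (r_pos K) \<le> mean_square r"
    by (rule has_sum_mono[OF parseval[OF r_pos_cont] parseval[OF r_cont]])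
       (auto simp: fourier_coeff_r_pos pos_coeff_def)
  then show ?thesis using mean_square_r by simp
qed

text \<open>Multiplying by \<open>cnj P\<close> costs
  little since \<open>15/16 \<le> |P| \<le> 17/16\<close> and \<open>P\<close> is Lipschitz; \<open>|r|\<^sup>2\<close> moves at most
  \<open>1/8\<close> as fast as \<open>r\<close> because \<open>|r| \<le> 1/16\<close>.\<close>

lemma rot_diff_r_neg_le:
  assumes t: "0 \<le> t"
  shows "mean_square (rot_diff t (r_neg K))
           \<le> 8 * mean_square (rot_diff t (\<lambda>z. cnj (P z) * r_neg K z)) + (8 * lip^2 * t^2) * mean_square (r_neg K)"
proof (rule mean_square_le)
  show "circle_continuous (rot_diff t (r_neg K))" "circle_continuous (rot_diff t (\<lambda>z. cnj (P z) * r_neg K z))"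
    "circle_continuous (r_neg K)"
    by (intro circle_continuous_rot_diff continuous_intros P_cont r_neg_cont)+
  show "0 \<le> (8::real)" "0 \<le> 8 * lip^2 * t^2" by auto
  fix z :: complex assume z: "z \<in> sphere 0 1"
  define z' where "z' = cis t * z"
  have z': "z' \<in> sphere 0 1" unfolding z'_def using z by (rule cis_mult_sphere)
  define d where "d = r_neg K z' - r_neg K z"
  define du where "du = cnj (P z') * r_neg K z' - cnj (P z) * r_neg K z"
  have d_eq: "cnj (P z') * d = du - (cnj (P z') - cnj (P z)) * r_neg K z"
    unfolding d_def du_def by (simp add: algebra_simps)
  have "cmod (P z') * cmod d = cmod (cnj (P z') * d)" by (simp add: norm_mult)
  also have "\<dots> \<le> cmod du + cmod (P z' - P z) * cmod (r_neg K z)"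
    unfolding d_eq by (metis complex_cnj_diff complex_mod_cnj norm_mult norm_triangle_ineq4)
  also have "\<dots> \<le> cmod du + (lip * t) * cmod (r_neg K z)"
    using P_lipschitz[OF z t] by (simp add: z'_def mult_right_mono)
  finally have 1: "cmod (P z') * cmod d \<le> cmod du + lip * t * cmod (r_neg K z)" .
  have "(1/2) * cmod d \<le> cmod (P z') * cmod d"
    using P_lower[OF z'] by (intro mult_right_mono) auto
  with 1 have "cmod d \<le> 2 * cmod du + 2 * (lip * t * cmod (r_neg K z))" by linarith
  then have "(cmod d)^2 \<le> 2 * (2 * cmod du)^2 + 2 * (2 * (lip * t * cmod (r_neg K z)))^2"
    by (rule sq_le_two_sq_sum) (use lip_nonneg t in auto)
  then show "(cmod (rot_diff t (r_neg K) z))^2 \<le> 8 * (cmod (rot_diff t (\<lambda>z. cnj (P z) * r_neg K z) z))^2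
        + 8 * lip^2 * t^2 * (cmod (r_neg K z))^2"
    unfolding rot_diff_def d_def du_def z'_def by (simp add: power_mult_distrib)
qed

lemma rot_diff_cnj_P_r_neg_le:
  "mean_square (rot_diff t (\<lambda>z. cnj (P z) * r_neg K z))
     \<le> 2 * mean_square (rot_diff t (cross K)) + 2 * mean_square (rot_diff t (\<lambda>z. P z * cnj (r_pos K z)))"
proof (rule mean_square_le)
  show "circle_continuous (rot_diff t (\<lambda>z. cnj (P z) * r_neg K z))" "circle_continuous (rot_diff t (cross K))"
    "circle_continuous (rot_diff t (\<lambda>z. P z * cnj (r_pos K z)))"
    by (intro circle_continuous_rot_diff continuous_intros P_cont r_neg_cont r_pos_cont cross_cont)+
  fix z :: complex
  have "rot_diff t (\<lambda>z. cnj (P z) * r_neg K z) z = rot_diff t (cross K) z - rot_diff t (\<lambda>z. P z * cnj (r_pos K z)) z"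
    unfolding rot_diff_def cross_def by simp
  then show "(cmod (rot_diff t (\<lambda>z. cnj (P z) * r_neg K z) z))^2 \<le> 2 * (cmod (rot_diff t (cross K) z))^2
      + 2 * (cmod (rot_diff t (\<lambda>z. P z * cnj (r_pos K z)) z))^2"
    by (simp add: norm_diff_sq_le)
qed auto

lemma rot_diff_P_cnj_r_pos_le:
  assumes t: "0 \<le> t"
  shows "mean_square (rot_diff t (\<lambda>z. P z * cnj (r_pos K z)))
           \<le> 3 * mean_square (rot_diff t (r_pos K)) + (2 * lip^2 * t^2) * mean_square (r_pos K)"
proof (rule mean_square_le)
  show "circle_continuous (rot_diff t (\<lambda>z. P z * cnj (r_pos K z)))" "circle_continuous (rot_diff t (r_pos K))"
    "circle_continuous (r_pos K)"
    by (intro circle_continuous_rot_diff continuous_intros P_cont r_pos_cont)+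
  show "0 \<le> (3::real)" "0 \<le> 2 * lip^2 * t^2" by auto
  fix z :: complex assume z: "z \<in> sphere 0 1"
  define z' where "z' = cis t * z"
  have z': "z' \<in> sphere 0 1" unfolding z'_def using z by (rule cis_mult_sphere)
  define d where "d = r_pos K z' - r_pos K z"
  have eq: "P z' * cnj (r_pos K z') - P z * cnj (r_pos K z) = P z' * cnj d + (P z' - P z) * cnj (r_pos K z)"
    unfolding d_def by (simp add: algebra_simps)
  have "cmod (P z' * cnj (r_pos K z') - P z * cnj (r_pos K z))
      \<le> cmod (P z') * cmod d + cmod (P z' - P z) * cmod (r_pos K z)"
    unfolding eq by (metis complex_mod_cnj norm_mult norm_triangle_ineq)
  also have "\<dots> \<le> (17/16) * cmod d + (lip * t) * cmod (r_pos K z)"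
    using P_lipschitz[OF z t] P_upper[OF z'] by (intro add_mono mult_right_mono) (auto simp: z'_def)
  finally have "(cmod (P z' * cnj (r_pos K z') - P z * cnj (r_pos K z)))^2
      \<le> 2 * ((17/16) * cmod d)^2 + 2 * ((lip * t) * cmod (r_pos K z))^2"
    by (rule sq_le_two_sq_sum) (use lip_nonneg t in auto)
  also have "\<dots> \<le> 3 * (cmod d)^2 + 2 * lip^2 * t^2 * (cmod (r_pos K z))^2"
    by (simp add: power_mult_distrib power2_eq_square)
  finally show "(cmod (rot_diff t (\<lambda>z. P z * cnj (r_pos K z)) z))^2 \<le> 3 * (cmod (rot_diff t (r_pos K) z))^2
        + 2 * lip^2 * t^2 * (cmod (r_pos K z))^2"
    unfolding rot_diff_def d_def z'_def .
qed

lemma rot_diff_r_sq_le: "mean_square (rot_diff t r_sq) \<le> (1/64) * mean_square (rot_diff t r)"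
proof -
  have "mean_square (rot_diff t r_sq) \<le> (1/64) * mean_square (rot_diff t r) + 0 * mean_square r"
  proof (rule mean_square_le)
    show "circle_continuous (rot_diff t r_sq)" "circle_continuous (rot_diff t r)" "circle_continuous r"
      by (intro circle_continuous_rot_diff r_sq_cont r_cont)+
    fix z :: complex assume z: "z \<in> sphere 0 1"
    define z' where "z' = cis t * z"
    have z': "z' \<in> sphere 0 1" unfolding z'_def using z by (rule cis_mult_sphere)
    have "cmod (r_sq z' - r_sq z) = \<bar>(cmod (r z'))^2 - (cmod (r z))^2\<bar>"
      unfolding r_sq_def by (metis norm_of_real of_real_diff)
    also have "\<dots> = (cmod (r z') + cmod (r z)) * \<bar>cmod (r z') - cmod (r z)\<bar>"
    proof -
      have "(cmod (r z'))^2 - (cmod (r z))^2 = (cmod (r z') + cmod (r z)) * (cmod (r z') - cmod (r z))"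
        by (simp add: power2_eq_square algebra_simps)
      then show ?thesis by (simp add: abs_mult)
    qed
    also have "\<dots> \<le> (1/8) * cmod (r z' - r z)"
    proof (rule mult_mono)
      show "cmod (r z') + cmod (r z) \<le> 1/8" using r_small[OF z] r_small[OF z'] by simp
      show "\<bar>cmod (r z') - cmod (r z)\<bar> \<le> cmod (r z' - r z)" by (rule norm_triangle_ineq3)
    qed auto
    finally have "(cmod (r_sq z' - r_sq z))^2 \<le> ((1/8) * cmod (r z' - r z))^2"
      by (rule power_mono) simp
    then show "(cmod (rot_diff t r_sq z))^2 \<le> 1/64 * (cmod (rot_diff t r z))^2 + 0 * (cmod (r z))^2"
      unfolding rot_diff_def z'_def[symmetric] by (simp add: power_mult_distrib power2_eq_square)
  qed auto
  then show ?thesis by simp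
qed

lemma fourier_coeff_cross:
  "fourier_coeff (cross K) m
     = (\<Sum>j\<in>I\<^sub>D. cnj (a j) * neg_coeff K (m + j)) + (\<Sum>j\<in>I\<^sub>D. a j * cnj (pos_coeff K (j - m)))"
proof -
  have "fourier_coeff (cross K) m
      = fourier_coeff (\<lambda>z. cnj (P z) * r_neg K z) m + fourier_coeff (\<lambda>z. P z * cnj (r_pos K z)) m"
    unfolding cross_def by (rule fourier_coeff_add) (intro continuous_intros P_cont r_neg_cont r_pos_cont)+
  then show ?thesis
    by (simp add: fourier_coeff_cnj_trig_poly_mult[OF r_neg_cont] fourier_coeff_trig_poly_mult_cnj[OF r_pos_cont]
                  fourier_coeff_r_neg fourier_coeff_r_pos)
qed

lemma cross_eq:
  assumes z: "z \<in> sphere 0 1"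
  shows "cross K z = ((1 - P z * cnj (P z)) - r_sq z) - cnj (P z) * (r z - r_neg K z) - P z * cnj (r z - r_pos K z)"
proof -
  have "(P z + r z) * cnj (P z + r z) = 1"
    using f_unimodular[OF z] complex_norm_square[of "f z"] by (simp add: r_def)
  moreover have "r_sq z = r z * cnj (r z)" unfolding r_sq_def by (rule complex_norm_square)
  moreover have "((1 - P z * cnj (P z)) - r z * cnj (r z)) - cnj (P z) * (r z - r_neg K z) - P z * cnj (r z - r_pos K z)
     = cross K z + (1 - (P z + r z) * cnj (P z + r z))"
    unfolding cross_def by (simp add: algebra_simps)
  ultimately show ?thesis by simp
qed

text \<open>The frequency bands: for \<open>K > 3D\<close> the support \<open>[-K-D, D]\<close> of \<open>cross K\<close> is the disjoint
  union of the high band, the window and the low band.\<close>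

definition window :: "nat \<Rightarrow> int set" where "window K = {-int K + int D .. -2*int D - 1}"
definition low_band :: "int set" where "low_band = {-2*int D .. int D}"
definition high_band :: "nat \<Rightarrow> int set" where "high_band K = {-int K - int D .. -int K + int D - 1}"

lemma fourier_coeff_cross_window:
  assumes m: "m \<in> window K"
  shows "fourier_coeff (cross K) m = - fourier_coeff r_sq m"
proof -
  have m1: "-int K + int D \<le> m" "m \<le> -2*int D - 1" using m by (auto simp: window_def)
  have const: "fourier_coeff (\<lambda>z. 1) m = 0" using m1 by (simp add: fourier_coeff_const)
  have PP: "fourier_coeff (\<lambda>z. P z * cnj (P z)) m = 0"
    by (rule fourier_coeff_trig_poly_norm_sq[OF a_band]) (use m1 in simp)
  have neg: "fourier_coeff (\<lambda>z. cnj (P z) * (r z - r_neg K z)) m = 0"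
  proof -
    have "fourier_coeff (\<lambda>z. cnj (P z) * (r z - r_neg K z)) m
        = (\<Sum>j\<in>I\<^sub>D. cnj (a j) * (fourier_coeff r (m + j) - neg_coeff K (m + j)))"
      by (simp add: fourier_coeff_cnj_trig_poly_mult fourier_coeff_diff r_cont r_neg_cont
                    fourier_coeff_r_neg continuous_intros)
    also have "\<dots> = 0"
      by (rule sum.neutral) (use m1 in \<open>auto simp: neg_coeff_def\<close>)
    finally show ?thesis .
  qed
  have pos: "fourier_coeff (\<lambda>z. P z * cnj (r z - r_pos K z)) m = 0"
  proof -
    have "fourier_coeff (\<lambda>z. P z * cnj (r z - r_pos K z)) m
        = (\<Sum>j\<in>I\<^sub>D. a j * cnj (fourier_coeff (\<lambda>z. r z - r_pos K z) (j - m)))"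
      by (rule fourier_coeff_trig_poly_mult_cnj) (intro continuous_intros r_cont r_pos_cont)
    also have "\<dots> = (\<Sum>j\<in>I\<^sub>D. a j * cnj (fourier_coeff r (j - m) - pos_coeff K (j - m)))"
      by (simp only: fourier_coeff_diff[OF r_cont r_pos_cont] fourier_coeff_r_pos)
    also have "\<dots> = 0"
      by (rule sum.neutral) (use m1 in \<open>auto simp: pos_coeff_def\<close>)
    finally show ?thesis .
  qed
  have "fourier_coeff (cross K) m
      = fourier_coeff (\<lambda>z. ((1 - P z * cnj (P z)) - r_sq z) - cnj (P z) * (r z - r_neg K z)
                            - P z * cnj (r z - r_pos K z)) m"
    by (rule fourier_coeff_cong) (rule cross_eq, simp)
  also have "\<dots> = ((fourier_coeff (\<lambda>z. 1) m - fourier_coeff (\<lambda>z. P z * cnj (P z)) m) - fourier_coeff r_sq m)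
                   - fourier_coeff (\<lambda>z. cnj (P z) * (r z - r_neg K z)) m
                   - fourier_coeff (\<lambda>z. P z * cnj (r z - r_pos K z)) m"
    by (subst fourier_coeff_diff; (intro continuous_intros P_cont r_cont r_neg_cont r_pos_cont r_sq_cont)?)+
       (rule refl)
  also have "\<dots> = - fourier_coeff r_sq m" unfolding const PP neg pos by simp
  finally show ?thesis .
qed

lemma fourier_coeff_cross_support:
  assumes "m \<notin> {-int K - int D..int D}"
  shows "fourier_coeff (cross K) m = 0"
  unfolding fourier_coeff_cross
  by (rule add_eq_0_iff2[THEN iffD2, OF _] ; (rule sum.neutral)?)
     (use assms in \<open>auto simp: neg_coeff_def pos_coeff_def\<close>)

lemma fourier_coeff_cross_bound:
  assumes B: "\<And>j. j \<in> I\<^sub>D \<Longrightarrow> cmod (neg_coeff K (m + j)) \<le> B \<and> cmod (pos_coeff K (j - m)) \<le> B"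
  shows "cmod (fourier_coeff (cross K) m) \<le> 2 * coeff_l1 * B"
proof -
  have "cmod (fourier_coeff (cross K) m)
      \<le> cmod (\<Sum>j\<in>I\<^sub>D. cnj (a j) * neg_coeff K (m + j)) + cmod (\<Sum>j\<in>I\<^sub>D. a j * cnj (pos_coeff K (j - m)))"
    unfolding fourier_coeff_cross by (rule norm_triangle_ineq)
  also have "\<dots> \<le> (\<Sum>j\<in>I\<^sub>D. cmod (a j) * B) + (\<Sum>j\<in>I\<^sub>D. cmod (a j) * B)"
  proof (rule add_mono)
    show "cmod (\<Sum>j\<in>I\<^sub>D. cnj (a j) * neg_coeff K (m + j)) \<le> (\<Sum>j\<in>I\<^sub>D. cmod (a j) * B)"
      by (rule order_trans[OF norm_sum], rule sum_mono)
         (use B in \<open>auto simp: norm_mult intro: mult_left_mono\<close>)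
    show "cmod (\<Sum>j\<in>I\<^sub>D. a j * cnj (pos_coeff K (j - m))) \<le> (\<Sum>j\<in>I\<^sub>D. cmod (a j) * B)"
      by (rule order_trans[OF norm_sum], rule sum_mono)
         (use B in \<open>auto simp: norm_mult intro: mult_left_mono\<close>)
  qed
  also have "\<dots> = 2 * coeff_l1 * B" by (simp add: coeff_l1_def sum_distrib_right)
  finally show ?thesis .
qed

text \<open>The energy \<open>\<Sum> w\<^sub>t(m) |\<hat>cross(m)|\<^sup>2\<close> of \<open>\<Delta>\<^sub>t (cross K)\<close> splits over three bands: the
  window contributes at most \<open>\<parallel>\<Delta>\<^sub>t |r|\<^sup>2\<parallel>\<^sup>2\<close>, the low band (where \<open>w\<^sub>t(m) \<le> (mt)\<^sup>2\<close>)
  is \<open>O(t\<^sup>2)\<close>, and the high band only involves coefficients of \<open>r\<close> beyond \<open>K - 2D\<close>.\<close>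

definition C_low :: real where "C_low = real (3*D+1) * (4 * (real D)^2) * (coeff_l1/8)^2"
definition C_high :: real where "C_high = 32 * real D * coeff_l1^2"

lemma C_low_nonneg: "0 \<le> C_low" unfolding C_low_def by simp
lemma C_high_nonneg: "0 \<le> C_high" unfolding C_high_def by simp

lemma cross_energy_low_band:
  "(\<Sum>m\<in>low_band. diff_weight t m * (cmod (fourier_coeff (cross K) m))^2) \<le> C_low * t^2"
proof -
  have "(\<Sum>m\<in>low_band. diff_weight t m * (cmod (fourier_coeff (cross K) m))^2)
      \<le> (\<Sum>m\<in>low_band. (4 * (real D)^2 * t^2) * (coeff_l1/8)^2)"
  proof (rule sum_mono)
    fix m assume m: "m \<in> low_band"
    have "diff_weight t m \<le> (of_int \<bar>m\<bar>)^2 * t^2"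
      using diff_weight_le_sq[of t m] by (simp add: power_mult_distrib)
    also have "\<dots> \<le> (2 * real D)^2 * t^2"
      using m by (intro mult_right_mono power_mono) (auto simp: low_band_def)
    finally have w: "diff_weight t m \<le> 4 * (real D)^2 * t^2" by (simp add: power_mult_distrib)
    have "cmod (fourier_coeff (cross K) m) \<le> 2 * coeff_l1 * (1/16)"
      by (rule fourier_coeff_cross_bound) (rule conjI[OF neg_coeff_small pos_coeff_small])
    then have "(cmod (fourier_coeff (cross K) m))^2 \<le> (coeff_l1/8)^2" by (intro power_mono) auto
    then show "diff_weight t m * (cmod (fourier_coeff (cross K) m))^2 \<le> (4 * (real D)^2 * t^2) * (coeff_l1/8)^2"
      using w by (intro mult_mono) (auto simp: diff_weight_nonneg)
  qed
  also have "\<dots> = C_low * t^2" by (simp add: low_band_def C_low_def)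
  finally show ?thesis .
qed

lemma cross_energy_high_band:
  assumes eta: "0 \<le> \<eta>"
    and small: "\<And>m. int K - 2*int D \<le> \<bar>m\<bar> \<Longrightarrow> cmod (fourier_coeff r m) \<le> \<eta>"
  shows "(\<Sum>m\<in>high_band K. diff_weight t m * (cmod (fourier_coeff (cross K) m))^2) \<le> C_high * \<eta>^2"
proof -
  have "(\<Sum>m\<in>high_band K. diff_weight t m * (cmod (fourier_coeff (cross K) m))^2)
      \<le> (\<Sum>m\<in>high_band K. 4 * (2 * coeff_l1 * \<eta>)^2)"
  proof (rule sum_mono)
    fix m assume m: "m \<in> high_band K"
    have "cmod (fourier_coeff (cross K) m) \<le> 2 * coeff_l1 * \<eta>"
    proof (rule fourier_coeff_cross_bound, intro conjI)
      fix j assume j: "j \<in> I\<^sub>D"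
      show "cmod (neg_coeff K (m + j)) \<le> \<eta>"
        using m j eta by (auto simp: neg_coeff_def high_band_def intro!: small)
      show "cmod (pos_coeff K (j - m)) \<le> \<eta>"
        using m j eta by (auto simp: pos_coeff_def high_band_def intro!: small)
    qed
    then have "(cmod (fourier_coeff (cross K) m))^2 \<le> (2 * coeff_l1 * \<eta>)^2" by (intro power_mono) auto
    then show "diff_weight t m * (cmod (fourier_coeff (cross K) m))^2 \<le> 4 * (2 * coeff_l1 * \<eta>)^2"
      using diff_weight_le_4[of t m] by (intro mult_mono) (auto simp: diff_weight_nonneg)
  qed
  also have "\<dots> = C_high * \<eta>^2" by (simp add: high_band_def C_high_def power_mult_distrib)
  finally show ?thesis .
qed

lemma rot_diff_cross_le:
  assumes t: "0 \<le> t" "t \<le> 2*pi" and K: "3*D+1 \<le> K" and eta: "0 \<le> \<eta>"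
    and small: "\<And>m. int K - 2*int D \<le> \<bar>m\<bar> \<Longrightarrow> cmod (fourier_coeff r m) \<le> \<eta>"
  shows "mean_square (rot_diff t (cross K)) \<le> mean_square (rot_diff t r_sq) + C_low * t^2 + C_high * \<eta>^2"
proof -
  define g where "g m = diff_weight t m * (cmod (fourier_coeff (cross K) m))^2" for m
  have bands: "{-int K - int D..int D} = high_band K \<union> window K \<union> low_band"
    and disj: "high_band K \<inter> window K = {}" "(high_band K \<union> window K) \<inter> low_band = {}"
    using K by (auto simp: high_band_def window_def low_band_def)
  have "(g has_sum mean_square (rot_diff t (cross K))) UNIV"
    unfolding g_def by (rule parseval_rot_diff[OF cross_cont t])
  moreover have "(g has_sum sum g {-int K - int D..int D}) UNIV"
    by (rule has_sum_finite_neutralI) (auto simp: g_def fourier_coeff_cross_support)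
  ultimately have "mean_square (rot_diff t (cross K)) = sum g {-int K - int D..int D}"
    using has_sum_unique by blast
  also have "\<dots> = sum g (high_band K) + sum g (window K) + sum g low_band"
    unfolding bands using disj
    by (simp add: sum.union_disjoint high_band_def window_def low_band_def)
  finally have split: "mean_square (rot_diff t (cross K)) = sum g (high_band K) + sum g (window K) + sum g low_band" .
  have "sum g (window K) \<le> mean_square (rot_diff t r_sq)"
  proof -
    have "sum g (window K) = (\<Sum>m\<in>window K. diff_weight t m * (cmod (fourier_coeff r_sq m))^2)"
      by (rule sum.cong) (auto simp: g_def fourier_coeff_cross_window)
    also have "\<dots> \<le> mean_square (rot_diff t r_sq)"
      by (rule finite_sum_le_has_sum[OF parseval_rot_diff[OF r_sq_cont t]])
         (auto simp: window_def diff_weight_nonneg)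
    finally show ?thesis .
  qed
  then show ?thesis
    using split cross_energy_low_band[of t K] cross_energy_high_band[where K=K and t=t, OF eta small]
    unfolding g_def by linarith
qed

definition C_main :: real where "C_main = 16 * C_low + 40 * lip^2"

lemma C_main_nonneg: "0 \<le> C_main"
  unfolding C_main_def using C_low_nonneg by simp

lemma rot_diff_r_neg_bound:
  assumes t: "0 \<le> t" "t \<le> 2*pi" and K: "3*D+1 \<le> K" and eta: "0 \<le> \<eta>"
    and small: "\<And>m. int K - 2*int D \<le> \<bar>m\<bar> \<Longrightarrow> cmod (fourier_coeff r m) \<le> \<eta>"
  shows "mean_square (rot_diff t (r_neg K))
           \<le> (1/4) * mean_square (rot_diff t r) + 48 * mean_square (rot_diff t (r_pos K))
             + C_main * t^2 + 16 * C_high * \<eta>^2"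
proof -
  have neg: "(8 * lip^2 * t^2) * mean_square (r_neg K) \<le> 8 * lip^2 * t^2"
    using mean_square_r_neg[of K] by (intro mult_left_le) auto
  have pos: "(2 * lip^2 * t^2) * mean_square (r_pos K) \<le> 2 * lip^2 * t^2"
    using mean_square_r_pos[of K] by (intro mult_left_le) auto
  show ?thesis
    using rot_diff_r_neg_le[OF t(1), of K] rot_diff_cnj_P_r_neg_le[of t K]
      rot_diff_P_cnj_r_pos_le[OF t(1), of K] rot_diff_cross_le[OF t K eta small]
      rot_diff_r_sq_le[of t] neg pos
    unfolding C_main_def by (simp add: algebra_simps)
qed

definition energy :: "real \<Rightarrow> int \<Rightarrow> real" where
  "energy t m = diff_weight t m * (cmod (fourier_coeff r m))^2"

definition neg_energy :: "real \<Rightarrow> real" where "neg_energy t = infsum (energy t) {..<0}"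
definition pos_energy :: "real \<Rightarrow> real" where "pos_energy t = infsum (energy t) {0<..}"

lemma energy_nonneg: "0 \<le> energy t m"
  unfolding energy_def by (simp add: diff_weight_nonneg)

lemma energy_has_sum: "0 \<le> t \<Longrightarrow> t \<le> 2*pi \<Longrightarrow> (energy t has_sum mean_square (rot_diff t r)) UNIV"
  unfolding energy_def by (rule parseval_rot_diff[OF r_cont])

lemma energy_summable: "0 \<le> t \<Longrightarrow> t \<le> 2*pi \<Longrightarrow> energy t summable_on A"
  using energy_has_sum summable_on_subset by (metis has_sum_iff top_greatest)

lemma pos_energy_nonneg: "0 \<le> pos_energy t"
  unfolding pos_energy_def by (rule infsum_nonneg) (simp add: energy_nonneg)

text \<open>The zero frequency carries no energy, so \<open>\<parallel>\<Delta>\<^sub>t r\<parallel>\<^sup>2 = X(t) + Y(t)\<close>.\<close>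

lemma energy_split:
  assumes t: "0 \<le> t" "t \<le> 2*pi"
  shows "mean_square (rot_diff t r) = neg_energy t + pos_energy t"
proof -
  have "(energy t has_sum neg_energy t + pos_energy t) ({..<0} \<union> {0<..})"
    unfolding neg_energy_def pos_energy_def
    by (intro has_sum_Un_disjoint has_sum_infsum energy_summable[OF t]) auto
  then have "(energy t has_sum neg_energy t + pos_energy t) UNIV"
    by (rule has_sum_cong_neutral[THEN iffD1, rotated -1]) (auto simp: energy_def diff_weight_zero)
  with energy_has_sum[OF t] show ?thesis using has_sum_unique by blast
qed

lemma rot_diff_r_pos_le_pos_energy:
  assumes t: "0 \<le> t" "t \<le> 2*pi"
  shows "mean_square (rot_diff t (r_pos K)) \<le> pos_energy t"
  unfolding pos_energy_def
  by (rule has_sum_mono_neutral[OF parseval_rot_diff[OF r_pos_cont t] has_sum_infsum[OF energy_summable[OF t]]])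
     (auto simp: fourier_coeff_r_pos pos_coeff_def energy_def diff_weight_nonneg)

text \<open>Negative frequencies in \<open>[-K, -1]\<close> see only the piece \<open>r\<^sup>-\<^sub>K\<close>.\<close>

lemma neg_partial_energy_le:
  assumes t: "0 \<le> t" "t \<le> 2*pi" and F: "finite F" "F \<subseteq> {..<0}" "F \<subseteq> {-int K..int K}"
  shows "sum (energy t) F \<le> mean_square (rot_diff t (r_neg K))"
proof -
  have "sum (energy t) F = (\<Sum>m\<in>F. diff_weight t m * (cmod (fourier_coeff (r_neg K) m))^2)"
    by (rule sum.cong) (use F in \<open>auto simp: fourier_coeff_r_neg neg_coeff_def energy_def\<close>)
  also have "\<dots> \<le> mean_square (rot_diff t (r_neg K))"
    by (rule finite_sum_le_has_sum[OF parseval_rot_diff[OF r_neg_cont t]])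
       (use F in \<open>auto simp: diff_weight_nonneg\<close>)
  finally show ?thesis .
qed

text \<open>Any finite part of \<open>X(t)\<close> lies in some window \<open>[-K, -1]\<close>; choosing \<open>K\<close> so large that
  \<open>|\<hat>r(m)| \<le> \<eta>\<close> beyond \<open>K - 2D\<close> (Riemann--Lebesgue) makes the main estimate applicable.\<close>

lemma neg_energy_le_with_error:
  assumes t: "0 \<le> t" "t \<le> 2*pi" and eta: "0 < \<eta>"
  shows "neg_energy t \<le> (1/4) * (neg_energy t + pos_energy t) + 48 * pos_energy t + C_main * t^2
                         + 16 * C_high * \<eta>^2"
proof -
  obtain N where N: "\<And>m. N \<le> \<bar>m\<bar> \<Longrightarrow> cmod (fourier_coeff r m) \<le> \<eta>"
    using fourier_coeff_eventually_small[OF r_cont eta] by blast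
  show ?thesis
    unfolding neg_energy_def
  proof (rule infsum_le_finite_sums[OF energy_summable[OF t]])
    fix F :: "int set" assume F: "finite F" "F \<subseteq> {..<0}"
    obtain K0 where K0: "F \<subseteq> {-int K0..int K0}" using finite_int_set_bounded[OF F(1)] .
    define K where "K = 3*D + 1 + nat N + K0"
    have FK: "F \<subseteq> {-int K..int K}" using K0 by (auto simp: K_def)
    have small: "cmod (fourier_coeff r m) \<le> \<eta>" if "int K - 2*int D \<le> \<bar>m\<bar>" for m
      using that by (intro N) (auto simp: K_def split: if_splits)
    have "sum (energy t) F \<le> mean_square (rot_diff t (r_neg K))"
      by (rule neg_partial_energy_le[OF t F FK])
    also have "\<dots> \<le> (1/4) * mean_square (rot_diff t r) + 48 * mean_square (rot_diff t (r_pos K))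
                    + C_main * t^2 + 16 * C_high * \<eta>^2"
      by (rule rot_diff_r_neg_bound[OF t _ less_imp_le[OF eta] small]) (simp add: K_def)
    finally show "sum (energy t) F \<le> (1/4) * (infsum (energy t) {..<0} + pos_energy t) + 48 * pos_energy t
                    + C_main * t^2 + 16 * C_high * \<eta>^2"
      using energy_split[OF t] rot_diff_r_pos_le_pos_energy[OF t, of K] by (simp add: neg_energy_def)
  qed
qed

text \<open>Letting \<open>\<eta> \<rightarrow> 0\<close> and absorbing \<open>X(t)/4\<close>: \<open>X(t) \<le> 65 Y(t) + 2 C t\<^sup>2\<close>.\<close>

lemma neg_energy_le:
  assumes t: "0 \<le> t" "t \<le> 2*pi"
  shows "neg_energy t \<le> 65 * pos_energy t + 2 * C_main * t^2"
proof -
  have "neg_energy t \<le> (1/4) * (neg_energy t + pos_energy t) + 48 * pos_energy t + C_main * t^2"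
    by (rule le_of_forall_pos_sq_error[of "16 * C_high"])
       (use C_high_nonneg neg_energy_le_with_error[OF t] in auto)
  moreover have "0 \<le> C_main * t^2" using C_main_nonneg by simp
  ultimately show ?thesis using pos_energy_nonneg[of t] by (simp add: ring_distribs)
qed

end

text \<open>Dyadic description of the homogeneous weight \<open>|m|\<^sup>2\<^sup>s\<close>, \<open>0 < s < 1\<close>: with \<open>t\<^sub>j = \<pi>/2\<^sup>j\<close>,
  \<open>|m|\<^sup>2\<^sup>s \<le> \<onehalf> \<Sum>\<^sub>j 4\<^sup>j\<^sup>s w\<^sub>t\<^sub>j(m) \<le> C\<^sub>s |m|\<^sup>2\<^sup>s\<close>. The lower bound uses the scale where \<open>m t\<^sub>j\<close> lies in
  \<open>[\<pi>/2, \<pi>]\<close>; the upper bound uses \<open>w \<le> 4\<close> at coarse scales and \<open>w \<le> (mt)\<^sup>2\<close> at fine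
  ones, both geometric series because \<open>1 < 4\<^sup>s < 4\<close>.\<close>

definition dyadic_const :: "real \<Rightarrow> real" where
  "dyadic_const s = 4 * (4 powr s) / (4 powr s - 1) + pi^2 / (1 - 4 powr s / 4)"

lemma four_powr_power: "((4::real) powr s)^n = (2^n) powr (2 * s)"
proof -
  have "((4::real) powr s)^n = (2 powr 2) powr (real n * s)" by (simp add: powr_power)
  also have "\<dots> = 2 powr (2 * (real n * s))" by (rule powr_powr)
  also have "\<dots> = (2 powr real n) powr (2 * s)" by (simp add: powr_powr mult_ac)
  finally show ?thesis by (simp add: powr_realpow)
qed

lemma four_powr_bounds:
  assumes "0 < s" "s < 1"
  shows "1 < (4::real) powr s" "(4::real) powr s < 4"
  using powr_less_mono[of 0 s 4] powr_less_mono[of s 1 4] assms by auto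

lemma int_dyadic_interval:
  assumes "m \<noteq> 0"
  obtains k :: nat where "2^k \<le> \<bar>real_of_int m\<bar>" "\<bar>real_of_int m\<bar> < 2^(k+1)"
proof -
  have "1 \<le> nat \<bar>m\<bar>" using assms by simp
  then obtain k where k: "2^k \<le> nat \<bar>m\<bar>" "nat \<bar>m\<bar> < 2^(k+1)"
    using ex_power_ivl1[of 2 "nat \<bar>m\<bar>"] by auto
  have "real (2^k) \<le> real (nat \<bar>m\<bar>)" "real (nat \<bar>m\<bar>) < real (2^(k+1))"
    using k by (simp_all only: of_nat_le_iff of_nat_less_iff)
  moreover have "real (nat \<bar>m\<bar>) = \<bar>real_of_int m\<bar>" by simp
  ultimately show ?thesis using that by simp
qed

lemma cos_nonpos: "pi/2 \<le> x \<Longrightarrow> x \<le> pi \<Longrightarrow> cos x \<le> 0"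
  using cos_ge_zero[of "pi - x"] by (simp add: cos_diff)

text \<open>Lower bound: at the scale \<open>j\<close> with \<open>2\<^sup>j\<^sup>-\<^sup>1 \<le> |m| < 2\<^sup>j\<close> one has \<open>m t\<^sub>j \<in> [\<pi>/2, \<pi>]\<close>, so
  \<open>w\<^sub>t\<^sub>j(m) \<ge> 2\<close>, while \<open>|m|\<^sup>2\<^sup>s \<le> 4\<^sup>j\<^sup>s\<close>.\<close>

lemma dyadic_lower:
  assumes s: "0 < s" and m: "m \<noteq> 0" and J: "\<bar>real_of_int m\<bar> < 2^J"
  shows "\<bar>real_of_int m\<bar> powr (2 * s) \<le> (1/2) * (\<Sum>j\<le>J. ((4::real) powr s)^j * diff_weight (pi/2^j) m)"
proof -
  let ?n = "\<bar>real_of_int m\<bar>"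
  obtain k where k: "2^k \<le> ?n" "?n < 2^(k+1)" using int_dyadic_interval[OF m] .
  define j where "j = k + 1"
  have "(2::real)^k < 2^J" using k(1) J by linarith
  then have jJ: "j \<le> J" unfolding j_def by (simp add: power_strict_increasing_iff)
  have "cos (of_int m * (pi/2^j)) = cos (?n * (pi / 2^j))"
    by (cases "m \<ge> 0") auto
  also have "\<dots> \<le> 0"
  proof (rule cos_nonpos)
    have "pi/2 = 2^k * (pi/2^j)" by (simp add: j_def field_simps)
    also have "\<dots> \<le> ?n * (pi/2^j)" using k by (intro mult_right_mono) auto
    finally show "pi/2 \<le> ?n * (pi/2^j)" .
    have "?n * (pi/2^j) \<le> 2^j * (pi/2^j)" using k unfolding j_def by (intro mult_right_mono) auto
    then show "?n * (pi/2^j) \<le> pi" by simp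
  qed
  finally have w2: "2 \<le> diff_weight (pi/2^j) m" by (simp add: diff_weight_eq)
  have "?n powr (2 * s) \<le> (2^j) powr (2 * s)"
    using k s unfolding j_def by (intro powr_mono2) auto
  also have "\<dots> = ((4::real) powr s)^j" by (simp add: four_powr_power)
  also have "\<dots> \<le> (1/2) * (((4::real) powr s)^j * diff_weight (pi/2^j) m)"
    using w2 by (simp add: mult_le_cancel_left1)
  also have "\<dots> \<le> (1/2) * (\<Sum>j\<le>J. ((4::real) powr s)^j * diff_weight (pi/2^j) m)"
    by (intro mult_left_mono member_le_sum) (use jJ in \<open>auto simp: diff_weight_nonneg\<close>)
  finally show ?thesis .
qed

text \<open>Upper bound, coarse scales \<open>j \<le> k\<close> (where \<open>2\<^sup>k \<le> |m|\<close>): \<open>w \<le> 4\<close> and a geometric series.\<close>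

lemma dyadic_upper_coarse:
  assumes s: "0 < s" "s < 1" and k: "2^k \<le> n"
  shows "(\<Sum>j\<in>{j\<in>{..J}. j \<le> k}. ((4::real) powr s)^j * diff_weight (pi/2^j) m)
           \<le> 4 * (4 powr s) / (4 powr s - 1) * n powr (2 * s)"
proof -
  define x where "x = (4::real) powr s"
  have x1: "1 < x" unfolding x_def by (rule four_powr_bounds(1)[OF s])
  have xk: "x^k \<le> n powr (2 * s)"
  proof -
    have "x^k = (2^k) powr (2 * s)" unfolding x_def by (rule four_powr_power)
    also have "\<dots> \<le> n powr (2 * s)" using k s by (intro powr_mono2) auto
    finally show ?thesis .
  qed
  have "(\<Sum>j\<in>{j\<in>{..J}. j \<le> k}. x^j * diff_weight (pi/2^j) m) \<le> (\<Sum>j\<in>{j\<in>{..J}. j \<le> k}. 4 * x^j)"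
    by (rule sum_mono) (use x1 diff_weight_le_4 in \<open>auto intro: mult_left_mono[of _ 4, simplified mult.commute]\<close>)
  also have "\<dots> \<le> (\<Sum>j<k+1. 4 * x^j)" by (rule sum_mono2) (use x1 in auto)
  also have "\<dots> = 4 * (\<Sum>j<k+1. x^j)" by (rule sum_distrib_left[symmetric])
  also have "(\<Sum>j<k+1. x^j) = (x^(k+1) - 1) / (x - 1)" by (rule geometric_sum) (use x1 in simp)
  also have "4 * ((x^(k+1) - 1) / (x - 1)) \<le> 4 * (x^(k+1) / (x - 1))"
    using x1 by (intro mult_left_mono divide_right_mono) auto
  also have "x^(k+1) = x * x^k" by simp
  also have "4 * (x * x^k / (x - 1)) \<le> 4 * (x * n powr (2 * s) / (x - 1))"
    using x1 xk by (intro mult_left_mono divide_right_mono) auto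
  finally show ?thesis unfolding x_def by simp
qed

lemma geometric_tail_le:
  fixes \<rho> :: real
  assumes rho: "0 < \<rho>" "\<rho> < 1"
  shows "(\<Sum>j\<in>{j\<in>{..J}. k < j}. \<rho>^j) \<le> \<rho>^(k+1) / (1 - \<rho>)"
proof -
  let ?T = "{j\<in>{..J}. k < j}"
  have "(\<Sum>j\<in>?T. \<rho>^j) = (\<Sum>j\<in>?T. \<rho>^(k+1) * \<rho>^(j - (k+1)))"
  proof (intro sum.cong refl)
    fix j assume "j \<in> ?T"
    then have "j = (k+1) + (j - (k+1))" by auto
    then show "\<rho>^j = \<rho>^(k+1) * \<rho>^(j - (k+1))" by (metis power_add)
  qed
  also have "\<dots> = \<rho>^(k+1) * (\<Sum>i\<in>(\<lambda>j. j - (k+1)) ` ?T. \<rho>^i)"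
    by (subst sum.reindex) (auto simp: inj_on_def sum_distrib_left)
  also have "\<dots> \<le> \<rho>^(k+1) * (1 / (1 - \<rho>))"
    using geometric_sum_less[OF rho] rho by (intro mult_left_mono less_imp_le) auto
  finally show ?thesis by simp
qed

text \<open>Upper bound, fine scales \<open>j > k\<close> (where \<open>|m| < 2\<^sup>k\<^sup>+\<^sup>1\<close>): \<open>w\<^sub>t(m) \<le> (mt)\<^sup>2\<close> turns the sum
  into \<open>\<pi>\<^sup>2 m\<^sup>2 \<Sum>\<^sub>j\<^sub>>\<^sub>k (4\<^sup>s/4)\<^sup>j\<close>, a geometric tail of size \<open>O(|m|\<^sup>2\<^sup>s\<^sup>-\<^sup>2)\<close>.\<close>

lemma dyadic_upper_fine:
  assumes s: "0 < s" "s < 1" and n: "1 \<le> \<bar>real_of_int m\<bar>" "\<bar>real_of_int m\<bar> < 2^(k+1)"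
  shows "(\<Sum>j\<in>{j\<in>{..J}. k < j}. ((4::real) powr s)^j * diff_weight (pi/2^j) m)
           \<le> pi^2 / (1 - 4 powr s / 4) * \<bar>real_of_int m\<bar> powr (2 * s)"
proof -
  let ?n = "\<bar>real_of_int m\<bar>" and ?T = "{j\<in>{..J}. k < j}"
  define x where "x = (4::real) powr s"
  define \<rho> where "\<rho> = x / 4"
  have rho: "0 < \<rho>" "\<rho> < 1" using four_powr_bounds[OF s] by (simp_all add: \<rho>_def x_def)
  have each: "x^j * diff_weight (pi/2^j) m \<le> pi^2 * ?n^2 * \<rho>^j" for j
  proof -
    have "(2::real)^j * 2^j = (2*2)^j" by (rule power_mult_distrib[symmetric])
    then have "(4::real)^j = (2^j)^2" by (simp add: power2_eq_square)
    then have "(of_int m * (pi/2^j))^2 = pi^2 * ?n^2 / 4^j"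
      by (simp add: power_mult_distrib power_divide)
    then have "x^j * diff_weight (pi/2^j) m \<le> x^j * (pi^2 * ?n^2 / 4^j)"
      using diff_weight_le_sq[of "pi/2^j" m] four_powr_bounds[OF s] by (intro mult_left_mono) (auto simp: x_def)
    also have "\<dots> = pi^2 * ?n^2 * \<rho>^j" by (simp add: \<rho>_def power_divide)
    finally show ?thesis .
  qed
  have geom: "(\<Sum>j\<in>?T. \<rho>^j) \<le> \<rho>^(k+1) / (1 - \<rho>)"
    by (rule geometric_tail_le[OF rho])
  have scale: "?n^2 * \<rho>^(k+1) \<le> ?n powr (2 * s)"
  proof -
    have "\<rho>^(k+1) = (4 powr (s - 1))^(k+1)" by (simp add: \<rho>_def x_def powr_diff)
    also have "\<dots> = (2^(k+1)) powr (2*(s-1))" by (rule four_powr_power)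
    also have "\<dots> \<le> ?n powr (2*(s-1))" using n s by (intro powr_mono2') auto
    finally have "?n^2 * \<rho>^(k+1) \<le> ?n powr 2 * ?n powr (2*(s-1))"
      using n by (simp add: powr_realpow mult_left_mono)
    also have "\<dots> = ?n powr (2 + 2*(s-1))" by (rule powr_add[symmetric])
    also have "\<dots> = ?n powr (2 * s)" by (simp add: algebra_simps)
    finally show ?thesis .
  qed
  have "(\<Sum>j\<in>?T. x^j * diff_weight (pi/2^j) m) \<le> (\<Sum>j\<in>?T. pi^2 * ?n^2 * \<rho>^j)"
    by (rule sum_mono) (rule each)
  also have "\<dots> = pi^2 * (\<Sum>j\<in>?T. \<rho>^j) * ?n^2" by (simp add: sum_distrib_left sum_distrib_right mult_ac)
  also have "\<dots> \<le> pi^2 * (\<rho>^(k+1) / (1 - \<rho>)) * ?n^2"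
    using geom by (intro mult_right_mono mult_left_mono) auto
  also have "\<dots> = pi^2 / (1 - \<rho>) * (?n^2 * \<rho>^(k+1))" by simp
  also have "\<dots> \<le> pi^2 / (1 - \<rho>) * ?n powr (2 * s)"
    using scale rho by (intro mult_left_mono) auto
  finally show ?thesis by (simp add: x_def \<rho>_def)
qed

lemma dyadic_upper:
  assumes s: "0 < s" "s < 1" and m: "m \<noteq> 0"
  shows "(\<Sum>j\<le>J. ((4::real) powr s)^j * diff_weight (pi/2^j) m) \<le> dyadic_const s * \<bar>real_of_int m\<bar> powr (2 * s)"
proof -
  obtain k where k: "2^k \<le> \<bar>real_of_int m\<bar>" "\<bar>real_of_int m\<bar> < 2^(k+1)" using int_dyadic_interval[OF m] .
  have "1 \<le> \<bar>real_of_int m\<bar>" using m by linarith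
  have scales: "{..J} = {j\<in>{..J}. j \<le> k} \<union> {j\<in>{..J}. k < j}" by auto
  have "(\<Sum>j\<le>J. ((4::real) powr s)^j * diff_weight (pi/2^j) m)
      = (\<Sum>j\<in>{j\<in>{..J}. j \<le> k}. ((4::real) powr s)^j * diff_weight (pi/2^j) m)
        + (\<Sum>j\<in>{j\<in>{..J}. k < j}. ((4::real) powr s)^j * diff_weight (pi/2^j) m)"
    by (subst scales, rule sum.union_disjoint) auto
  then show ?thesis
    using dyadic_upper_coarse[where J=J and m=m, OF s k(1)] dyadic_upper_fine[where J=J, OF s \<open>1 \<le> _\<close> k(2)]
    unfolding dyadic_const_def by (simp add: algebra_simps)
qed

text \<open>The \<open>O(t\<^sup>2)\<close> error terms remain bounded after dyadic summation: \<open>\<Sum>\<^sub>j 4\<^sup>j\<^sup>s t\<^sub>j\<^sup>2 < \<infinity>\<close>.\<close>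

lemma dyadic_scale_sum:
  assumes s: "0 < s" "s < 1"
  shows "(\<Sum>j\<le>J. ((4::real) powr s)^j * (pi/2^j)^2) \<le> pi^2 / (1 - 4 powr s / 4)"
proof -
  define \<rho> where "\<rho> = (4::real) powr s / 4"
  have rho: "0 < \<rho>" "\<rho> < 1" using four_powr_bounds[OF s] by (simp_all add: \<rho>_def)
  have "((4::real) powr s)^j * (pi/2^j)^2 = pi^2 * \<rho>^j" for j
  proof -
    have "(2::real)^j * 2^j = (2*2)^j" by (rule power_mult_distrib[symmetric])
    then have "((2::real)^j)^2 = 4^j" by (simp add: power2_eq_square)
    then show ?thesis by (simp add: \<rho>_def power_divide)
  qed
  then have "(\<Sum>j\<le>J. ((4::real) powr s)^j * (pi/2^j)^2) = pi^2 * (\<Sum>j\<le>J. \<rho>^j)"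
    by (simp add: sum_distrib_left)
  also have "\<dots> \<le> pi^2 * (1 / (1 - \<rho>))"
    using geometric_sum_less[OF rho, of "{..J}"] by (intro mult_left_mono) auto
  finally show ?thesis by (simp add: \<rho>_def)
qed

text \<open>Every dyadic scale lies in the range \<open>[0, 2\<pi>]\<close> where rotation invariance was proved.\<close>

lemma dyadic_scale_range: "0 \<le> pi / 2^j \<and> pi / 2^j \<le> 2*pi"
proof -
  have "pi / 2^j \<le> pi / 1" by (intro divide_left_mono) auto
  moreover have "0 \<le> pi / 2^j" by simp
  ultimately show ?thesis using pi_gt_zero by linarith
qed

lemma has_sum_finite_sum:
  fixes f :: "'i \<Rightarrow> 'a \<Rightarrow> real"
  assumes "finite I" "\<And>i. i \<in> I \<Longrightarrow> (f i has_sum S i) A"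
  shows "((\<lambda>x. \<Sum>i\<in>I. f i x) has_sum (\<Sum>i\<in>I. S i)) A"
  using assms
proof (induction I rule: finite_induct)
  case empty then show ?case by simp
next
  case (insert i I) then show ?case by (simp add: has_sum_add)
qed

context unimodular_approx
begin

lemma dyadic_pos_energy_le:
  assumes s: "0 < s" "s < 1"
    and pos: "(\<lambda>m. \<bar>real_of_int m\<bar> powr (2 * s) * (cmod (fourier_coeff r m))^2) summable_on {0<..}"
  shows "(\<Sum>j\<le>J. (4 powr s)^j * pos_energy (pi/2^j))
           \<le> dyadic_const s * infsum (\<lambda>m. \<bar>real_of_int m\<bar> powr (2 * s) * (cmod (fourier_coeff r m))^2) {0<..}"
proof (rule has_sum_mono)
  show "((\<lambda>m. \<Sum>j\<le>J. (4 powr s)^j * energy (pi/2^j) m) has_sum (\<Sum>j\<le>J. (4 powr s)^j * pos_energy (pi/2^j))) {0<..}"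
    unfolding pos_energy_def
    by (intro has_sum_finite_sum has_sum_cmult_right has_sum_infsum energy_summable) (auto simp: dyadic_scale_range)
  show "((\<lambda>m. dyadic_const s * (\<bar>real_of_int m\<bar> powr (2 * s) * (cmod (fourier_coeff r m))^2))
          has_sum dyadic_const s * infsum (\<lambda>m. \<bar>real_of_int m\<bar> powr (2 * s) * (cmod (fourier_coeff r m))^2) {0<..}) {0<..}"
    by (intro has_sum_cmult_right has_sum_infsum pos)
next
  fix m :: int assume "m \<in> {0<..}"
  then have "(\<Sum>j\<le>J. (4 powr s)^j * diff_weight (pi/2^j) m) \<le> dyadic_const s * \<bar>real_of_int m\<bar> powr (2 * s)"
    by (intro dyadic_upper s) auto
  then show "(\<Sum>j\<le>J. (4 powr s)^j * energy (pi/2^j) m)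
      \<le> dyadic_const s * (\<bar>real_of_int m\<bar> powr (2 * s) * (cmod (fourier_coeff r m))^2)"
    by (simp add: energy_def sum_distrib_right[symmetric] mult.assoc[symmetric] mult_right_mono)
qed

lemma neg_weighted_partial_sum_le:
  assumes s: "0 < s" and F: "finite F" "F \<subseteq> {..<0}" "F \<subseteq> {-int J..int J}"
  shows "(\<Sum>m\<in>F. \<bar>real_of_int m\<bar> powr (2 * s) * (cmod (fourier_coeff r m))^2)
           \<le> (1/2) * (\<Sum>j\<le>J. (4 powr s)^j * neg_energy (pi/2^j))"
proof -
  have "(\<Sum>m\<in>F. \<bar>real_of_int m\<bar> powr (2 * s) * (cmod (fourier_coeff r m))^2)
      \<le> (\<Sum>m\<in>F. ((1/2) * (\<Sum>j\<le>J. (4 powr s)^j * diff_weight (pi/2^j) m)) * (cmod (fourier_coeff r m))^2)"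
  proof (rule sum_mono)
    fix m assume m: "m \<in> F"
    have "\<bar>real_of_int m\<bar> \<le> real J" using m F(3) by force
    also have "\<dots> < 2^J" by (metis less_exp of_nat_less_iff of_nat_numeral of_nat_power)
    finally have J: "\<bar>real_of_int m\<bar> < 2^J" .
    have "m \<noteq> 0" using m F(2) by auto
    then have "\<bar>real_of_int m\<bar> powr (2 * s) \<le> (1/2) * (\<Sum>j\<le>J. (4 powr s)^j * diff_weight (pi/2^j) m)"
      using J by (rule dyadic_lower[OF s])
    then show "\<bar>real_of_int m\<bar> powr (2 * s) * (cmod (fourier_coeff r m))^2
        \<le> ((1/2) * (\<Sum>j\<le>J. (4 powr s)^j * diff_weight (pi/2^j) m)) * (cmod (fourier_coeff r m))^2"
      by (intro mult_right_mono) auto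
  qed
  also have "\<dots> = (1/2) * (\<Sum>j\<le>J. (4 powr s)^j * sum (energy (pi/2^j)) F)"
    by (simp add: energy_def sum_distrib_left sum_distrib_right mult_ac sum.swap[of _ F])
  also have "\<dots> \<le> (1/2) * (\<Sum>j\<le>J. (4 powr s)^j * neg_energy (pi/2^j))"
    unfolding neg_energy_def
    by (intro mult_left_mono sum_mono finite_sum_le_infsum energy_summable)
       (use F in \<open>auto simp: dyadic_scale_range energy_nonneg\<close>)
  finally show ?thesis .
qed

text \<open>The coefficients of \<open>f\<close> and \<open>r\<close> differ only in finitely many places.\<close>

lemma weighted_summable_f_iff_r:
  assumes c: "\<And>m. 0 \<le> c m"
  shows "(\<lambda>m. c m * (cmod (fourier_coeff f m))^2) summable_on A
           \<longleftrightarrow> (\<lambda>m. c m * (cmod (fourier_coeff r m))^2) summable_on A"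
proof -
  have supp: "finite {m. a m \<noteq> 0}" "finite {m. - a m \<noteq> 0}"
    using band_limited_finite_support[OF a_band] by simp_all
  show ?thesis
    using weighted_sq_summable_finite_perturb[where u="fourier_coeff f" and A=A, OF _ supp(1) c]
          weighted_sq_summable_finite_perturb[where u="fourier_coeff r" and A=A, OF _ supp(2) c]
    by (auto simp: fourier_coeff_r)
qed

theorem neg_weighted_summable:
  assumes s: "0 < s" "s < 1"
    and pos: "(\<lambda>m. \<bar>real_of_int m\<bar> powr (2 * s) * (cmod (fourier_coeff r m))^2) summable_on {0<..}"
  shows "(\<lambda>m. \<bar>real_of_int m\<bar> powr (2 * s) * (cmod (fourier_coeff r m))^2) summable_on {..<0}"
proof (rule nonneg_bdd_above_summable_on)
  define Y where "Y = infsum (\<lambda>m. \<bar>real_of_int m\<bar> powr (2 * s) * (cmod (fourier_coeff r m))^2) {0<..}"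
  define B where "B = (1/2) * (65 * (dyadic_const s * Y) + 2 * C_main * (pi^2 / (1 - 4 powr s / 4)))"
  have "(\<Sum>m\<in>F. \<bar>real_of_int m\<bar> powr (2 * s) * (cmod (fourier_coeff r m))^2) \<le> B"
    if F: "finite F" "F \<subseteq> {..<0}" for F
  proof -
    obtain J where J: "F \<subseteq> {-int J..int J}" using finite_int_set_bounded[OF F(1)] .
    have "(\<Sum>m\<in>F. \<bar>real_of_int m\<bar> powr (2 * s) * (cmod (fourier_coeff r m))^2)
        \<le> (1/2) * (\<Sum>j\<le>J. (4 powr s)^j * neg_energy (pi/2^j))"
      by (rule neg_weighted_partial_sum_le[OF s(1) F J])
    also have "\<dots> \<le> (1/2) * (\<Sum>j\<le>J. (4 powr s)^j * (65 * pos_energy (pi/2^j) + 2 * C_main * (pi/2^j)^2))"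
      by (intro mult_left_mono sum_mono neg_energy_le) (auto simp: dyadic_scale_range)
    also have "\<dots> = (1/2) * (65 * (\<Sum>j\<le>J. (4 powr s)^j * pos_energy (pi/2^j))
                             + 2 * C_main * (\<Sum>j\<le>J. (4 powr s)^j * (pi/2^j)^2))"
      by (simp add: sum.distrib sum_distrib_left algebra_simps)
    also have "\<dots> \<le> B"
      unfolding B_def Y_def using C_main_nonneg dyadic_pos_energy_le[OF s pos] dyadic_scale_sum[OF s]
      by (intro mult_left_mono add_mono) auto
    finally show ?thesis .
  qed
  then show "bdd_above (sum (\<lambda>m. \<bar>real_of_int m\<bar> powr (2 * s) * (cmod (fourier_coeff r m))^2)
               ` {F. F \<subseteq> {..<0} \<and> finite F})"
    by (intro bdd_aboveI[of _ B]) auto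
qed auto

end

lemma summable_on_nonneg_ints:
  fixes g :: "int \<Rightarrow> real"
  assumes "\<And>m. 0 \<le> g m" and "summable (\<lambda>n. g (int n))"
  shows "g summable_on {0..}"
proof -
  have "(g \<circ> int) summable_on UNIV"
    using summable_on_UNIV_nonneg_real_iff[of "g \<circ> int"] assms by (simp add: o_def)
  then have "g summable_on range int" by (subst summable_on_reindex) (auto simp: inj_on_def)
  moreover have "range int = {0..}" by (auto simp: image_iff) (metis nonneg_int_cases)
  ultimately show ?thesis by simp
qed

lemma continuous_on_sphere_measurable:
  fixes f :: "complex \<Rightarrow> complex"
  assumes "continuous_on (sphere 0 1) f"
  shows "f \<in> borel_measurable (restrict_space lborel (sphere 0 1))"
proof -
  have "f \<in> borel_measurable (restrict_space borel (sphere 0 1))"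
    by (rule borel_measurable_continuous_on_restrict[OF assms])
  moreover have "measurable (restrict_space lborel (sphere (0::complex) 1)) (borel :: complex measure)
      = measurable (restrict_space borel (sphere 0 1)) borel"
    by (rule measurable_cong_sets[OF sets_restrict_space_cong[OF sets_lborel] refl])
  ultimately show ?thesis by simp
qed

theorem mainTheorem1:
  fixes s :: real and f :: "complex \<Rightarrow> complex"
  assumes "0 < s" and "s < 1"
    and "continuous_on (sphere 0 1) f"
    and "f ` sphere 0 1 \<subseteq> sphere 0 1"
    and "summable (\<lambda>n::nat. real n powr (2 * s) * (cmod (fourier_coeff f (int n)))\<^sup>2)"
  shows "(\<lambda>n::int. \<bar>real_of_int n\<bar> powr (2 * s) * (cmod (fourier_coeff f n))\<^sup>2) summable_on UNIV
         \<and> f \<in> Hs_circle s"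
proof -
  obtain D a where a: "band_limited D a" "\<And>z. z \<in> sphere 0 1 \<Longrightarrow> cmod (f z - trig_poly D a z) \<le> 1/16"
    using trig_poly_approx[OF assms(3), of "1/16"] by auto
  interpret unimodular_approx f D a
    using assms(3,4) a by unfold_locales (auto simp: image_subset_iff)
  let ?w = "\<lambda>m::int. \<bar>real_of_int m\<bar> powr (2 * s)"
  have pos_f: "(\<lambda>m. ?w m * (cmod (fourier_coeff f m))^2) summable_on {0..}"
    by (rule summable_on_nonneg_ints) (use assms(5) in auto)
  then have "(\<lambda>m. ?w m * (cmod (fourier_coeff r m))^2) summable_on {0<..}"
    by (subst (asm) weighted_summable_f_iff_r) (auto elim: summable_on_subset)
  then have "(\<lambda>m. ?w m * (cmod (fourier_coeff r m))^2) summable_on {..<0}"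
    by (rule neg_weighted_summable[OF assms(1,2)])
  then have "(\<lambda>m. ?w m * (cmod (fourier_coeff f m))^2) summable_on {..<0}"
    by (subst weighted_summable_f_iff_r) auto
  then have "(\<lambda>m. ?w m * (cmod (fourier_coeff f m))^2) summable_on ({..<0} \<union> {0..})"
    using pos_f by (rule summable_on_union)
  moreover have "{..<0} \<union> {0..} = (UNIV :: int set)" by auto
  ultimately show ?thesis
    using continuous_on_sphere_measurable[OF assms(3)] assms(4) by (simp add: Hs_circle_def)
qed

end
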